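(* Let $H$ be a reduced double-well type potential and $\gamma$ its Puiseux exponent. Then, as $\beta\to+\infty$, \begin{enumerate} \item $-\frac1\beta\ln(\lambda_\beta-1)\to\gamma$; \item for $i=0,1$, $-\frac1\beta\ln F_\beta^i(\lambda_\beta)\to\min\{H_{min}^i,\ H_\infty^i-\gamma\}$; \item for $i=0,1$, $-\frac1\beta\ln\tilde F_\beta^i(\lambda_\beta)\to\min\{H_{min}^i,\ H_\infty^i-2\gamma\}$. \end{enumerate}
   Context: $\Sigma:=\{0,1\}^{\mathbb N}$. A reduced double-well type potential is a continuous nonnegative $H:\Sigma\to\mathbb R$ with summable variation such that $H=0$ on $[00]\cup[11]$, $H=H_n^0>0$ on $[01^n0]$, $H=H_n^1>0$ on $[10^n1]$ ($n\ge1$), and $\sum_{k\ge1}\sup_{n\ge0}|H_k^i-H_{k+n}^i|<\infty$ ($i=0,1$). $H_\infty^i:=\lim_nH_n^i$, $H_{min}^i:=\inf_{n\ge1}H_n^i$. Puiseux exponent: $\gamma:=\min\{\tfrac12(H_\infty^1+H_\infty^0),\ H_{min}^0+H_\infty^1,\ H_{min}^1+H_\infty^0\}$. $\lambda_\beta$ is the eigenvalue of the unique positive continuous eigenfunction of $\mathcal L_\beta[\Phi](x)=e^{-\beta H(0x)}\Phi(0x)+e^{-\beta H(1x)}\Phi(1x)$ (one has $\lambda_\beta>1$). $F_\beta^i(\lambda):=\sum_{k\ge1}\lambda^{-k}e^{-\beta H_k^i}$, $\tilde F_\beta^i(\lambda):=\sum_{k\ge1}k\lambda^{-k}e^{-\beta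 H_k^i}$. *)

theory Defs
  imports "HOL-Analysis.Analysis"
begin

text \<open>Sigma = {0,1}^N is modelled as nat => bool, with False standing for the
symbol 0 and True for the symbol 1.\<close>

type_synonym seq = "nat \<Rightarrow> bool"

definition cyl :: "bool list \<Rightarrow> seq set" where
  "cyl w = {x. \<forall>i<length w. x i = w ! i}"

definition scons :: "bool \<Rightarrow> seq \<Rightarrow> seq" where
  "scons b x = (\<lambda>n. case n of 0 \<Rightarrow> b | Suc m \<Rightarrow> x m)"

definition seq_continuous :: "(seq \<Rightarrow> real) \<Rightarrow> bool" where
  "seq_continuous f \<longleftrightarrow>
     (\<forall>x. \<forall>e>0. \<exists>N. \<forall>y. (\<forall>i<N. y i = x i) \<longrightarrow> \<bar>f y - f x\<bar> < e)"

definition var_n :: "(seq \<Rightarrow> real) \<Rightarrow> nat \<Rightarrow> real" where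
  "var_n f n = (SUP p \<in> {(x, y). \<forall>i<n. x i = y i}. \<bar>f (fst p) - f (snd p)\<bar>)"

definition summable_variation :: "(seq \<Rightarrow> real) \<Rightarrow> bool" where
  "summable_variation f \<longleftrightarrow>
     (\<forall>n. bdd_above ((\<lambda>p. \<bar>f (fst p) - f (snd p)\<bar>) ` {(x, y). \<forall>i<n. x i = y i}))
     \<and> summable (var_n f)"

definition tail_summable :: "(nat \<Rightarrow> real) \<Rightarrow> bool" where
  "tail_summable h \<longleftrightarrow>
     (\<forall>k\<ge>1. bdd_above (range (\<lambda>n. \<bar>h k - h (k + n)\<bar>)))
     \<and> summable (\<lambda>k. SUP n. \<bar>h (Suc k) - h (Suc k + n)\<bar>)"

text \<open>Reduced double-well type potential; h0 n = H_n^0, h1 n = H_n^1 (n >= 1;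
the value at index 0 is irrelevant).\<close>
definition reduced_double_well ::
    "(seq \<Rightarrow> real) \<Rightarrow> (nat \<Rightarrow> real) \<Rightarrow> (nat \<Rightarrow> real) \<Rightarrow> bool" where
  "reduced_double_well H h0 h1 \<longleftrightarrow>
     (\<forall>x. 0 \<le> H x) \<and> seq_continuous H \<and> summable_variation H
     \<and> (\<forall>x \<in> cyl [False, False] \<union> cyl [True, True]. H x = 0)
     \<and> (\<forall>n\<ge>1. h0 n > 0 \<and> (\<forall>x \<in> cyl ([False] @ replicate n True @ [False]). H x = h0 n))
     \<and> (\<forall>n\<ge>1. h1 n > 0 \<and> (\<forall>x \<in> cyl ([True] @ replicate n False @ [True]). H x = h1 n))
     \<and> tail_summable h0 \<and> tail_summable h1"

definition H_inf :: "(nat \<Rightarrow> real) \<Rightarrow> real" where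
  "H_inf h = lim h"

definition H_min :: "(nat \<Rightarrow> real) \<Rightarrow> real" where
  "H_min h = (INF n \<in> {1..}. h n)"

definition puiseux_gamma :: "(nat \<Rightarrow> real) \<Rightarrow> (nat \<Rightarrow> real) \<Rightarrow> real" where
  "puiseux_gamma h0 h1 =
     min (min ((H_inf h1 + H_inf h0) / 2) (H_min h0 + H_inf h1)) (H_min h1 + H_inf h0)"

definition transfer_op :: "(seq \<Rightarrow> real) \<Rightarrow> real \<Rightarrow> (seq \<Rightarrow> real) \<Rightarrow> seq \<Rightarrow> real" where
  "transfer_op H \<beta> \<Phi> x =
     exp (- \<beta> * H (scons False x)) * \<Phi> (scons False x)
     + exp (- \<beta> * H (scons True x)) * \<Phi> (scons True x)"

definition lambda_beta :: "(seq \<Rightarrow> real) \<Rightarrow> real \<Rightarrow> real" where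
  "lambda_beta H \<beta> = (THE l. \<exists>\<Phi>. seq_continuous \<Phi> \<and> (\<forall>x. 0 < \<Phi> x)
                                 \<and> (\<forall>x. transfer_op H \<beta> \<Phi> x = l * \<Phi> x))"

definition F_beta :: "(nat \<Rightarrow> real) \<Rightarrow> real \<Rightarrow> real \<Rightarrow> real" where
  "F_beta h \<beta> l = (\<Sum>k. (1 / l) ^ Suc k * exp (- \<beta> * h (Suc k)))"

definition Ft_beta :: "(nat \<Rightarrow> real) \<Rightarrow> real \<Rightarrow> real \<Rightarrow> real" where
  "Ft_beta h \<beta> l = (\<Sum>k. real (Suc k) * (1 / l) ^ Suc k * exp (- \<beta> * h (Suc k)))"

end

theory Submission
  imports Defs
begin

text \<open>For \<open>\<beta> > 0\<close> and any \<open>l > 1\<close> with \<open>F\<^sup>0(l) F\<^sup>1(l) = 1\<close> the transfer operator has an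
  explicit positive continuous eigenfunction with eigenvalue \<open>l\<close>: on the cylinder of
  \<open>a = x\<^sub>0\<close> it is, up to the constant factor \<open>F\<^sup>0(l)\<close> or \<open>1\<close>, the series over \<open>j\<close> of
  \<open>l\<^sup>-\<^sup>j\<^sup>-\<^sup>1 exp (-\<beta> H (\<not>a a\<^sup>j x))\<close>. Such an \<open>l\<close> exists by the intermediate value theorem,
  and by compactness of \<open>{0,1}\<^sup>\<nat>\<close> two positive continuous eigenfunctions have the same
  eigenvalue, so \<open>\<lambda>\<^sub>\<beta>\<close> is this root.

  Write \<open>\<lambda>\<^sub>\<beta> - 1 = exp (-\<beta> a)\<close>. Splitting \<open>F\<^sup>i(\<lambda>\<^sub>\<beta>)\<close> into finitely many terms of size
  \<open>exp (-\<beta> H\<^sup>i\<^sub>k)\<close> and a geometric tail of size \<open>exp (-\<beta> H\<^sup>i\<^sub>\<infinity>) / (\<lambda>\<^sub>\<beta> - 1)\<close> shows that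
  its exponential rate is \<open>min H\<^sup>i\<^sub>m\<^sub>i\<^sub>n (H\<^sup>i\<^sub>\<infinity> - a)\<close> up to \<open>O(\<eta>)\<close> for large \<open>\<beta>\<close>, and likewise
  for \<open>F\<^sup>~\<^sup>i\<close> with \<open>2a\<close>, the tail now being of size \<open>1/(\<lambda>\<^sub>\<beta> - 1)\<^sup>2\<close>. Since \<open>F\<^sup>0 F\<^sup>1 = 1\<close>
  the two rates add up to \<open>0\<close>, and this min-plus equation pins \<open>a\<close> down to the Puiseux
  exponent \<open>\<gamma>\<close> up to \<open>O(\<eta>)\<close>.\<close>

section \<open>Barrier heights\<close>

lemma tail_summable_imp_LIMSEQ:
  assumes "tail_summable h"
  shows "h \<longlonglongrightarrow> H_inf h"
proof -
  define d where "d = (\<lambda>k. SUP n. \<bar>h (Suc k) - h (Suc k + n)\<bar>)"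
  have d0: "d \<longlonglongrightarrow> 0"
    using assms unfolding tail_summable_def d_def by (auto intro: summable_LIMSEQ_zero)
  have le: "\<bar>h (Suc k) - h (Suc k + n)\<bar> \<le> d k" for k n
  proof -
    have "bdd_above (range (\<lambda>n. \<bar>h (Suc k) - h (Suc k + n)\<bar>))"
      using assms unfolding tail_summable_def by auto
    thus ?thesis unfolding d_def by (rule cSUP_upper[OF UNIV_I])
  qed
  have "Cauchy h"
  proof (rule CauchyI)
    fix e :: real assume e: "0 < e"
    from LIMSEQ_D[OF d0, of "e/2"] e obtain M where M: "\<forall>k\<ge>M. norm (d k - 0) < e/2"
      by auto
    have "norm (h m - h n) < e" if "m \<ge> Suc M" "n \<ge> Suc M" for m n
    proof -
      have m: "h m = h (Suc M + (m - Suc M))" and n: "h n = h (Suc M + (n - Suc M))"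
        using that by auto
      have "\<bar>h (Suc M) - h m\<bar> \<le> d M" "\<bar>h (Suc M) - h n\<bar> \<le> d M"
        using le[of M "m - Suc M"] le[of M "n - Suc M"] m n by auto
      moreover have "d M < e/2" using M by auto
      ultimately show ?thesis by auto
    qed
    thus "\<exists>M. \<forall>m\<ge>M. \<forall>n\<ge>M. norm (h m - h n) < e" by blast
  qed
  thus ?thesis unfolding H_inf_def by (simp add: Cauchy_convergent_iff convergent_LIMSEQ_iff)
qed

lemma LIMSEQ_eventually_close:
  fixes h :: "nat \<Rightarrow> real"
  assumes "h \<longlonglongrightarrow> L" "0 < \<eta>"
  shows "\<exists>K\<ge>1. \<forall>k\<ge>K. \<bar>h k - L\<bar> \<le> \<eta>"
proof -
  obtain N where N: "\<forall>n\<ge>N. norm (h n - L) < \<eta>" using LIMSEQ_D[OF assms] by blast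
  show ?thesis using N by (intro exI[of _ "Suc N"]) (auto intro: less_imp_le)
qed

lemma H_min_le:
  fixes h :: "nat \<Rightarrow> real"
  assumes "\<forall>n\<ge>1. 0 < h n"
  shows "\<forall>k\<ge>1. H_min h \<le> h k"
proof -
  have "bdd_below (h ` {1..})" using assms by (intro bdd_belowI[of _ 0]) (auto intro: less_imp_le)
  thus ?thesis unfolding H_min_def by (auto intro: cINF_lower)
qed

lemma H_min_nonneg:
  fixes h :: "nat \<Rightarrow> real"
  assumes "\<forall>n\<ge>1. 0 < h n"
  shows "0 \<le> H_min h"
  unfolding H_min_def by (rule cINF_greatest) (use assms in \<open>auto intro: less_imp_le\<close>)

lemma H_min_le_limit:
  fixes h :: "nat \<Rightarrow> real"
  assumes "\<forall>n\<ge>1. 0 < h n" "h \<longlonglongrightarrow> L"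
  shows "H_min h \<le> L"
  using assms H_min_le[OF assms(1)] by (intro LIMSEQ_le_const[of h L]) auto

lemma H_min_approx:
  fixes h :: "nat \<Rightarrow> real"
  assumes "\<forall>n\<ge>1. 0 < h n" "0 < \<eta>"
  shows "\<exists>k\<ge>1. h k < H_min h + \<eta>"
proof -
  have bdd: "bdd_below (h ` {1..})" using assms by (intro bdd_belowI[of _ 0]) (auto intro: less_imp_le)
  have "(INF n\<in>{1..}. h n) < H_min h + \<eta>" unfolding H_min_def using assms(2) by simp
  then obtain k where "k \<in> {1..}" "h k < H_min h + \<eta>"
    using cINF_less_iff[OF _ bdd] by auto
  thus ?thesis by auto
qed

lemma limit_eq_0_if_H_min_eq_0:
  fixes h :: "nat \<Rightarrow> real"
  assumes pos: "\<forall>n\<ge>1. 0 < h n" and lim: "h \<longlonglongrightarrow> L" and m0: "H_min h = 0"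
  shows "L = 0"
proof (rule ccontr)
  assume "L \<noteq> 0"
  hence Lp: "L > 0" using H_min_le_limit[OF pos lim] m0 by simp
  from lim Lp obtain N where N: "\<forall>n\<ge>N. dist (h n) L < L/2"
    unfolding LIMSEQ_def by (metis half_gt_zero_iff)
  define c where "c = min (L/2) (Min (h ` {1..Suc N}))"
  have "0 < Min (h ` {1..Suc N})" by (subst Min_gr_iff) (use pos in auto)
  hence cpos: "c > 0" unfolding c_def using Lp by simp
  have "c \<le> h k" if "k \<ge> 1" for k
  proof (cases "k \<le> N")
    case True thus ?thesis unfolding c_def using that by (auto intro!: min.coboundedI2 Min_le)
  next
    case False
    hence "\<bar>h k - L\<bar> < L/2" using N[rule_format, of k] unfolding dist_real_def by auto
    thus ?thesis unfolding c_def by (intro min.coboundedI1) linarith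
  qed
  hence "c \<le> H_min h" unfolding H_min_def by (auto intro!: cINF_greatest)
  thus False using m0 cpos by simp
qed

section \<open>The series F and F~\<close>

lemma sums_geometric_Suc:
  fixes l :: real assumes "1 < l"
  shows "(\<lambda>k. (1/l)^Suc k) sums (1/(l-1))"
proof -
  have "norm (1/l) < 1" using assms by simp
  from sums_mult[OF geometric_sums[OF this], of "1/l"]
  have "(\<lambda>k. (1/l)^Suc k) sums (1/l * (1/(1 - 1/l)))" by simp
  also have "1/l * (1/(1 - 1/l)) = 1/(l-1)" using assms by (simp add: field_simps)
  finally show ?thesis .
qed

lemma sums_weighted_geometric_Suc:
  fixes l :: real assumes "1 < l"
  shows "(\<lambda>k. real (Suc k) * (1/l)^Suc k) sums (l/(l-1)^2)"
proof -
  have nl: "norm (1/l) < 1" using assms by simp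
  have eq: "(\<lambda>n. 1/l * (of_nat (Suc n) * (1/l)^n)) = (\<lambda>k. real (Suc k) * (1/l)^Suc k)"
    by (rule ext) (simp only: power_Suc, simp)
  from sums_mult[OF geometric_deriv_sums[OF nl], of "1/l"]
  have "(\<lambda>k. real (Suc k) * (1/l)^Suc k) sums (1/l * (1/(1 - 1/l)^2))"
    unfolding eq .
  also have "1/l * (1/(1 - 1/l)^2) = l/(l-1)^2"
    using assms by (simp add: field_simps power2_eq_square)
  finally show ?thesis .
qed

lemma summable_geometric_Suc_mult_bounded:
  fixes l :: real
  assumes "1 < l" "\<And>j. 0 \<le> E j" "\<And>j. E j \<le> 1"
  shows "summable (\<lambda>j. (1/l)^Suc j * E j)"
proof (rule summable_comparison_test[OF _ sums_summable[OF sums_geometric_Suc[OF assms(1)]]])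
  have "norm ((1/l)^Suc j * E j) \<le> (1/l)^Suc j" for j
    using assms mult_left_mono[of "E j" 1 "(1/l)^Suc j"] by simp
  thus "\<exists>N. \<forall>n\<ge>N. norm ((1/l)^Suc n * E n) \<le> (1/l)^Suc n" by blast
qed

lemma summable_F_beta:
  fixes h :: "nat \<Rightarrow> real"
  assumes h: "\<forall>k\<ge>1. 0 \<le> h k" and b: "0 \<le> \<beta>" and l: "1 < l"
  shows "summable (\<lambda>k. (1/l)^Suc k * exp (- \<beta> * h (Suc k)))"
    and "summable (\<lambda>k. real (Suc k) * (1/l)^Suc k * exp (- \<beta> * h (Suc k)))"
proof -
  have e: "exp (- \<beta> * h (Suc k)) \<le> 1" for k
    using h b by (simp add: mult_nonneg_nonneg)
  show "summable (\<lambda>k. (1/l)^Suc k * exp (- \<beta> * h (Suc k)))"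
    by (rule summable_geometric_Suc_mult_bounded[OF l]) (use e in auto)
  have "real (Suc k) * (1/l)^Suc k * exp (- \<beta> * h (Suc k)) \<le> real (Suc k) * (1/l)^Suc k" for k
    using mult_left_mono[OF e[of k], of "real (Suc k) * (1/l)^Suc k"] l by simp
  thus "summable (\<lambda>k. real (Suc k) * (1/l)^Suc k * exp (- \<beta> * h (Suc k)))"
    by (intro summable_comparison_test[OF _ sums_summable[OF sums_weighted_geometric_Suc[OF l]]])
       (use l in \<open>auto intro!: exI[of _ 0]\<close>)
qed

lemma F_beta_pos:
  fixes h :: "nat \<Rightarrow> real"
  assumes "\<forall>k\<ge>1. 0 \<le> h k" "0 \<le> \<beta>" "1 < l"
  shows "0 < F_beta h \<beta> l"
  unfolding F_beta_def by (rule suminf_pos[OF summable_F_beta(1)[OF assms]]) (use assms in simp)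

lemma Ft_beta_pos:
  fixes h :: "nat \<Rightarrow> real"
  assumes "\<forall>k\<ge>1. 0 \<le> h k" "0 \<le> \<beta>" "1 < l"
  shows "0 < Ft_beta h \<beta> l"
  unfolding Ft_beta_def by (rule suminf_pos[OF summable_F_beta(2)[OF assms]]) (use assms in simp)

lemma F_beta_le:
  fixes h :: "nat \<Rightarrow> real"
  assumes h: "\<forall>k\<ge>1. 0 \<le> h k" and b: "0 \<le> \<beta>" and l: "1 < l"
  shows "F_beta h \<beta> l \<le> 1/(l-1)"
proof -
  have "(1/l)^Suc k * exp (- \<beta> * h (Suc k)) \<le> (1/l)^Suc k" for k
    using h b l mult_left_mono[of "exp (- \<beta> * h (Suc k))" 1 "(1/l)^Suc k"]
    by (simp add: mult_nonneg_nonneg)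
  thus ?thesis unfolding F_beta_def sums_unique[OF sums_geometric_Suc[OF l]]
    by (rule suminf_le[OF _ summable_F_beta(1)[OF h b l] sums_summable[OF sums_geometric_Suc[OF l]]])
qed

lemma F_beta_le_head_tail:
  fixes h :: "nat \<Rightarrow> real"
  assumes hm: "\<forall>k\<ge>1. m \<le> h k" and m: "0 \<le> m" and b: "0 \<le> \<beta>" and l: "1 < l"
    and hK: "\<forall>k\<ge>K. u \<le> h k"
  shows "F_beta h \<beta> l \<le> real K * exp (- \<beta> * m) + exp (- \<beta> * u) / (l - 1)"
proof -
  have h0: "\<forall>k\<ge>1. 0 \<le> h k" using hm m by force
  note S = summable_F_beta(1)[OF h0 b l]
  have lp: "0 < 1/l" "1/l \<le> 1" using l by auto
  have pw: "(1/l)^n \<le> 1" for n using lp by (simp add: power_le_one)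
  have em: "exp (- \<beta> * h (Suc k)) \<le> exp (- \<beta> * m)" for k
    using hm b by (simp add: mult_left_mono)
  have eu: "K \<le> Suc k \<Longrightarrow> exp (- \<beta> * h (Suc k)) \<le> exp (- \<beta> * u)" for k
    using hK b by (simp add: mult_left_mono)
  \<comment> \<open>the first \<open>K\<close> terms are bounded by \<open>e\<^sup>-\<^sup>\<beta>\<^sup>m\<close>, the others by a geometric tail\<close>
  define g where "g = (\<lambda>k. (if k \<in> {..<K} then exp (- \<beta> * m) else 0) + (1/l)^Suc k * exp (- \<beta> * u))"
  have gs: "g sums (real K * exp (- \<beta> * m) + exp (- \<beta> * u) / (l - 1))"
    unfolding g_def
    using sums_add[OF sums_If_finite_set[of "{..<K}" "\<lambda>_. exp (- \<beta> * m)"]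
        sums_mult2[OF sums_geometric_Suc[OF l], of "exp (- \<beta> * u)"]] by simp
  have le: "(1/l)^Suc k * exp (- \<beta> * h (Suc k)) \<le> g k" for k
  proof (cases "K \<le> Suc k")
    case True
    have "(1/l)^Suc k * exp (- \<beta> * h (Suc k)) \<le> (1/l)^Suc k * exp (- \<beta> * u)"
      using eu[OF True] lp by (intro mult_left_mono) auto
    moreover have "0 \<le> (if k \<in> {..<K} then exp (- \<beta> * m) else 0)" by simp
    ultimately show ?thesis unfolding g_def by linarith
  next
    case False
    have "(1/l)^Suc k * exp (- \<beta> * h (Suc k)) \<le> 1 * exp (- \<beta> * m)"
      using em[of k] pw[of "Suc k"] by (intro mult_mono) auto
    moreover have "0 \<le> (1/l)^Suc k * exp (- \<beta> * u)" using lp by simp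
    ultimately show ?thesis unfolding g_def using False by auto
  qed
  show "F_beta h \<beta> l \<le> real K * exp (- \<beta> * m) + exp (- \<beta> * u) / (l - 1)"
    unfolding F_beta_def sums_unique[OF gs] by (rule suminf_le[OF le S sums_summable[OF gs]])
qed

lemma Ft_beta_le_head_tail:
  fixes h :: "nat \<Rightarrow> real"
  assumes hm: "\<forall>k\<ge>1. m \<le> h k" and m: "0 \<le> m" and b: "0 \<le> \<beta>" and l: "1 < l"
    and hK: "\<forall>k\<ge>K. u \<le> h k"
  shows "Ft_beta h \<beta> l \<le> real K * real K * exp (- \<beta> * m) + exp (- \<beta> * u) * l / (l - 1)^2"
proof -
  have h0: "\<forall>k\<ge>1. 0 \<le> h k" using hm m by force
  note S = summable_F_beta(2)[OF h0 b l]
  have lp: "0 < 1/l" "1/l \<le> 1" using l by auto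
  have pw: "(1/l)^n \<le> 1" for n using lp by (simp add: power_le_one)
  have em: "exp (- \<beta> * h (Suc k)) \<le> exp (- \<beta> * m)" for k
    using hm b by (simp add: mult_left_mono)
  have eu: "K \<le> Suc k \<Longrightarrow> exp (- \<beta> * h (Suc k)) \<le> exp (- \<beta> * u)" for k
    using hK b by (simp add: mult_left_mono)
  define g where "g = (\<lambda>k. (if k \<in> {..<K} then real K * exp (- \<beta> * m) else 0)
      + real (Suc k) * (1/l)^Suc k * exp (- \<beta> * u))"
  have gs: "g sums (real K * real K * exp (- \<beta> * m) + exp (- \<beta> * u) * l / (l - 1)^2)"
    unfolding g_def
    using sums_add[OF sums_If_finite_set[of "{..<K}" "\<lambda>_. real K * exp (- \<beta> * m)"]
        sums_mult2[OF sums_weighted_geometric_Suc[OF l], of "exp (- \<beta> * u)"]]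
    by (simp add: mult_ac)
  have le: "real (Suc k) * (1/l)^Suc k * exp (- \<beta> * h (Suc k)) \<le> g k" for k
  proof (cases "K \<le> Suc k")
    case True
    have "real (Suc k) * (1/l)^Suc k * exp (- \<beta> * h (Suc k))
        \<le> real (Suc k) * (1/l)^Suc k * exp (- \<beta> * u)"
      using eu[OF True] lp by (intro mult_left_mono) auto
    moreover have "0 \<le> (if k \<in> {..<K} then real K * exp (- \<beta> * m) else 0)" by simp
    ultimately show ?thesis unfolding g_def by linarith
  next
    case False
    have "real (Suc k) * (1/l)^Suc k * exp (- \<beta> * h (Suc k)) \<le> real K * 1 * exp (- \<beta> * m)"
      using em[of k] pw[of "Suc k"] False lp by (intro mult_mono) auto
    moreover have "0 \<le> real (Suc k) * (1/l)^Suc k * exp (- \<beta> * u)" using lp by simp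
    ultimately show ?thesis unfolding g_def using False by auto
  qed
  show "Ft_beta h \<beta> l \<le> real K * real K * exp (- \<beta> * m) + exp (- \<beta> * u) * l / (l - 1)^2"
    unfolding Ft_beta_def sums_unique[OF gs] by (rule suminf_le[OF le S sums_summable[OF gs]])
qed

lemma half_power_le_inverse_power:
  fixes l :: real
  assumes "1 < l" "l \<le> 2" "n \<le> K"
  shows "(1/2)^K \<le> (1/l)^n"
proof -
  have "(1/2::real)^K \<le> (1/2)^n" using assms by (intro power_decreasing) auto
  also have "\<dots> \<le> (1/l)^n" using assms by (intro power_mono) (auto simp: field_simps)
  finally show ?thesis .
qed

lemma F_beta_ge_term:
  fixes h :: "nat \<Rightarrow> real"
  assumes h0: "\<forall>k\<ge>1. 0 \<le> h k" and b: "0 \<le> \<beta>" and l: "1 < l" "l \<le> 2"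
    and k: "1 \<le> k" "k \<le> K" "h k \<le> u"
  shows "(1/2)^K * exp (- \<beta> * u) \<le> F_beta h \<beta> l"
    and "(1/2)^K * exp (- \<beta> * u) \<le> Ft_beta h \<beta> l"
proof -
  note S = summable_F_beta[OF h0 b l(1)]
  define f where "f = (\<lambda>k. (1/l)^Suc k * exp (- \<beta> * h (Suc k)))"
  define f2 where "f2 = (\<lambda>k. real (Suc k) * (1/l)^Suc k * exp (- \<beta> * h (Suc k)))"
  have f0: "0 \<le> f j" "0 \<le> f2 j" for j unfolding f_def f2_def using l by auto
  have single: "(1/2)^K * exp (- \<beta> * u) \<le> (1/l)^k * exp (- \<beta> * h k)"
    using half_power_le_inverse_power[OF l k(2)] k b l
    by (intro mult_mono) (auto simp: mult_left_mono)
  have "f (k - 1) \<le> suminf f"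
    using sum_le_suminf[of f "{k - 1}"] S(1) f0 unfolding f_def by auto
  moreover have "f (k - 1) = (1/l)^k * exp (- \<beta> * h k)" unfolding f_def using k by simp
  ultimately show "(1/2)^K * exp (- \<beta> * u) \<le> F_beta h \<beta> l"
    using single unfolding F_beta_def f_def by simp
  have "f2 (k - 1) \<le> suminf f2"
    using sum_le_suminf[of f2 "{k - 1}"] S(2) f0 unfolding f2_def by auto
  moreover have "f2 (k - 1) = real k * ((1/l)^k * exp (- \<beta> * h k))"
    unfolding f2_def using k by simp
  moreover have "(1/l)^k * exp (- \<beta> * h k) \<le> real k * ((1/l)^k * exp (- \<beta> * h k))"
    using mult_right_mono[of 1 "real k" "(1/l)^k * exp (- \<beta> * h k)"] k l by simp
  ultimately show "(1/2)^K * exp (- \<beta> * u) \<le> Ft_beta h \<beta> l"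
    using single unfolding Ft_beta_def f2_def by simp
qed

lemma F_beta_ge_tail:
  fixes h :: "nat \<Rightarrow> real"
  assumes h0: "\<forall>k\<ge>1. 0 \<le> h k" and b: "0 \<le> \<beta>" and l: "1 < l" "l \<le> 2" and K: "1 \<le> K"
    and hK: "\<forall>k\<ge>K. h k \<le> u"
  shows "(1/2)^K * exp (- \<beta> * u) / (l - 1) \<le> F_beta h \<beta> l"
proof -
  note S = summable_F_beta(1)[OF h0 b l(1)]
  define f where "f = (\<lambda>k. (1/l)^Suc k * exp (- \<beta> * h (Suc k)))"
  have lp: "0 < 1/l" using l by simp
  have f0: "0 \<le> f j" for j unfolding f_def using lp by auto
  define c where "c = (1/l)^(K-1) * exp (- \<beta> * u)"
  have cK: "(1/2)^K * exp (- \<beta> * u) \<le> c" unfolding c_def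
    using half_power_le_inverse_power[OF l, of "K - 1" K] by (intro mult_right_mono) auto
  have eu: "exp (- \<beta> * u) \<le> exp (- \<beta> * h (Suc (n + (K - 1))))" for n
    using hK K b by (simp add: mult_left_mono)
  have pw: "(1/l)^Suc (n + (K - 1)) = (1/l)^(K-1) * (1/l)^Suc n" for n
    by (simp add: power_add[symmetric] algebra_simps)
  have t1: "c * (1/l)^Suc n \<le> f (n + (K - 1))" for n
  proof -
    have "c * (1/l)^Suc n = ((1/l)^(K-1) * (1/l)^Suc n) * exp (- \<beta> * u)"
      unfolding c_def by (simp add: mult_ac)
    also have "\<dots> \<le> ((1/l)^(K-1) * (1/l)^Suc n) * exp (- \<beta> * h (Suc (n + (K - 1))))"
      using eu[of n] lp by (intro mult_left_mono) auto
    also have "\<dots> = f (n + (K - 1))" by (simp only: f_def pw)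
    finally show ?thesis .
  qed
  have s1: "(\<lambda>n. c * (1/l)^Suc n) sums (c * (1/(l-1)))"
    by (rule sums_mult[OF sums_geometric_Suc[OF l(1)]])
  have "c * (1/(l-1)) \<le> (\<Sum>n. f (n + (K - 1)))"
    unfolding sums_unique[OF s1]
    by (rule suminf_le[OF t1 sums_summable[OF s1] summable_ignore_initial_segment]) (use S f_def in simp)
  also have "\<dots> \<le> suminf f"
    using suminf_split_initial_segment[of f "K - 1"] S f0 unfolding f_def by (simp add: sum_nonneg)
  finally have "c * (1/(l-1)) \<le> F_beta h \<beta> l" unfolding F_beta_def f_def .
  moreover have "(1/2)^K * exp (- \<beta> * u) / (l - 1) \<le> c * (1/(l-1))"
    using cK l by (simp add: divide_right_mono)
  ultimately show "(1/2)^K * exp (- \<beta> * u) / (l - 1) \<le> F_beta h \<beta> l" by linarith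
qed

lemma Ft_beta_ge_tail:
  fixes h :: "nat \<Rightarrow> real"
  assumes h0: "\<forall>k\<ge>1. 0 \<le> h k" and b: "0 \<le> \<beta>" and l: "1 < l" "l \<le> 2" and K: "1 \<le> K"
    and hK: "\<forall>k\<ge>K. h k \<le> u"
  shows "(1/2)^K * exp (- \<beta> * u) / (l - 1)^2 \<le> Ft_beta h \<beta> l"
proof -
  note S = summable_F_beta(2)[OF h0 b l(1)]
  define f where "f = (\<lambda>k. real (Suc k) * (1/l)^Suc k * exp (- \<beta> * h (Suc k)))"
  have lp: "0 < 1/l" using l by simp
  have f0: "0 \<le> f j" for j unfolding f_def using lp by auto
  define c where "c = (1/l)^(K-1) * exp (- \<beta> * u)"
  have c0: "0 \<le> c" unfolding c_def using lp by simp
  have cK: "(1/2)^K * exp (- \<beta> * u) \<le> c" unfolding c_def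
    using half_power_le_inverse_power[OF l, of "K - 1" K] by (intro mult_right_mono) auto
  have eu: "exp (- \<beta> * u) \<le> exp (- \<beta> * h (Suc (n + (K - 1))))" for n
    using hK K b by (simp add: mult_left_mono)
  have pw: "(1/l)^Suc (n + (K - 1)) = (1/l)^(K-1) * (1/l)^Suc n" for n
    by (simp add: power_add[symmetric] algebra_simps)
  have t: "c * (real (Suc n) * (1/l)^Suc n) \<le> f (n + (K - 1))" for n
  proof -
    have "c * (real (Suc n) * (1/l)^Suc n)
        = real (Suc n) * ((1/l)^(K-1) * (1/l)^Suc n) * exp (- \<beta> * u)"
      unfolding c_def by (simp add: mult_ac)
    also have "\<dots> \<le> real (Suc (n + (K - 1))) * ((1/l)^(K-1) * (1/l)^Suc n) * exp (- \<beta> * u)"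
      using lp by (intro mult_right_mono) auto
    also have "\<dots> \<le> f (n + (K - 1))"
      unfolding f_def pw using eu[of n] lp by (intro mult_left_mono) auto
    finally show ?thesis .
  qed
  have s2: "(\<lambda>n. c * (real (Suc n) * (1/l)^Suc n)) sums (c * (l/(l-1)^2))"
    by (rule sums_mult[OF sums_weighted_geometric_Suc[OF l(1)]])
  have "c * (l/(l-1)^2) \<le> (\<Sum>n. f (n + (K - 1)))"
    unfolding sums_unique[OF s2]
    by (rule suminf_le[OF t sums_summable[OF s2] summable_ignore_initial_segment]) (use S f_def in simp)
  also have "\<dots> \<le> suminf f"
    using suminf_split_initial_segment[of f "K - 1"] S f0 unfolding f_def by (simp add: sum_nonneg)
  finally have "c * (l/(l-1)^2) \<le> Ft_beta h \<beta> l" unfolding Ft_beta_def f_def .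
  moreover have "(1/2)^K * exp (- \<beta> * u) / (l - 1)^2 \<le> c * (l/(l-1)^2)"
  proof -
    have "(1/2)^K * exp (- \<beta> * u) \<le> c * l" using cK c0 l mult_left_mono[of 1 l c] by simp
    thus ?thesis using divide_right_mono[of _ "c * l" "(l-1)^2"] by simp
  qed
  ultimately show "(1/2)^K * exp (- \<beta> * u) / (l - 1)^2 \<le> Ft_beta h \<beta> l" by linarith
qed

lemma isCont_F_beta:
  fixes h :: "nat \<Rightarrow> real"
  assumes h0: "\<forall>k\<ge>1. 0 \<le> h k" and b: "0 \<le> \<beta>" and l: "1 < l"
  shows "isCont (\<lambda>l. F_beta h \<beta> l) l"
proof -
  define c where "c = (\<lambda>k. exp (- \<beta> * h (Suc k)))"
  have c01: "0 \<le> c k" "c k \<le> 1" for k unfolding c_def using h0 b by (auto simp: mult_nonneg_nonneg)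
  \<comment> \<open>\<open>F_beta h \<beta> l = G (1/l) / l\<close> for a power series \<open>G\<close> of radius at least \<open>1\<close>\<close>
  define G where "G = (\<lambda>z::real. \<Sum>n. c n * z^n)"
  have sumz: "summable (\<lambda>n. c n * z^n)" if "\<bar>z\<bar> < 1" for z
  proof (rule summable_comparison_test[OF _ summable_geometric[of "\<bar>z\<bar>"]])
    have "norm (c n * z ^ n) \<le> \<bar>z\<bar> ^ n" for n
      using c01[of n] mult_right_mono[of "c n" 1 "\<bar>z\<bar> ^ n"] by (simp add: abs_mult power_abs)
    thus "\<exists>N. \<forall>n\<ge>N. norm (c n * z ^ n) \<le> \<bar>z\<bar> ^ n" by blast
  qed (use that in simp)
  have p: "0 < (1 + 1/l)/2" "(1 + 1/l)/2 < 1" "1/l < (1 + 1/l)/2" "0 < 1/l"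
    using l by (simp_all add: field_simps)
  have iG: "isCont G (1/l)" unfolding G_def
    by (rule isCont_powser[OF sumz[of "(1 + 1/l)/2"]]) (simp_all only: real_norm_def abs_of_pos[OF p(1)] abs_of_pos[OF p(4)] p)
  have i1: "isCont (\<lambda>x::real. 1/x) l" using l by (intro continuous_intros) auto
  have c1: "isCont (\<lambda>x. 1/x * G (1/x)) l" by (rule isCont_mult[OF i1 isCont_o2[OF i1 iG]])
  have eq: "F_beta h \<beta> x = 1/x * G (1/x)" if "x \<in> {1<..}" for x
  proof -
    have x: "\<bar>1/x\<bar> < 1" using that by simp
    have "F_beta h \<beta> x = (\<Sum>k. 1/x * (c k * (1/x)^k))"
      unfolding F_beta_def c_def by (intro suminf_cong) (simp only: power_Suc mult_ac)
    also have "\<dots> = 1/x * G (1/x)" unfolding G_def by (rule suminf_mult[OF sumz[OF x]])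
    finally show ?thesis .
  qed
  have ev: "eventually (\<lambda>x. F_beta h \<beta> x = 1/x * G (1/x)) (nhds l)"
    using eventually_nhds_in_open[of "{1<..}" l] l eq by (auto elim!: eventually_mono)
  show ?thesis by (subst isCont_cong[OF ev]) (rule c1)
qed

lemma F_beta_product_eq_1_solvable:
  fixes h0 h1 :: "nat \<Rightarrow> real"
  assumes p0: "\<forall>k\<ge>1. 0 \<le> h0 k" and p1: "\<forall>k\<ge>1. 0 \<le> h1 k"
    and c0: "h0 \<longlonglongrightarrow> L0" and c1: "h1 \<longlonglongrightarrow> L1" and b: "0 < \<beta>"
  shows "\<exists>l. 1 < l \<and> F_beta h0 \<beta> l * F_beta h1 \<beta> l = 1"
proof -
  obtain K0 where K0: "K0 \<ge> 1" "\<forall>k\<ge>K0. h0 k \<le> L0 + 1"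
    using LIMSEQ_eventually_close[OF c0, of 1] by (force simp: abs_le_iff)
  obtain K1 where K1: "K1 \<ge> 1" "\<forall>k\<ge>K1. h1 k \<le> L1 + 1"
    using LIMSEQ_eventually_close[OF c1, of 1] by (force simp: abs_le_iff)
  define a0 where "a0 = (1/2::real)^K0 * exp (- \<beta> * (L0 + 1))"
  define a1 where "a1 = (1/2::real)^K1 * exp (- \<beta> * (L1 + 1))"
  define e where "e = min 1 (min a0 a1)"
  have ep: "0 < e" "e \<le> 1" "e \<le> a0" "e \<le> a1" unfolding e_def a0_def a1_def by auto
  \<comment> \<open>close to \<open>1\<close> both factors are at least \<open>1\<close>, at \<open>3\<close> both are at most \<open>1/2\<close>\<close>
  define l1 where "l1 = 1 + e"
  have l1: "1 < l1" "l1 \<le> 2" "l1 - 1 = e" unfolding l1_def using ep by auto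
  have "a0 / e \<le> F_beta h0 \<beta> l1"
    using F_beta_ge_tail[OF p0 _ l1(1,2) K0] b l1 unfolding a0_def by simp
  moreover have "1 \<le> a0 / e" using ep by simp
  ultimately have f0: "1 \<le> F_beta h0 \<beta> l1" by linarith
  have "a1 / e \<le> F_beta h1 \<beta> l1"
    using F_beta_ge_tail[OF p1 _ l1(1,2) K1] b l1 unfolding a1_def by simp
  moreover have "1 \<le> a1 / e" using ep by simp
  ultimately have f1: "1 \<le> F_beta h1 \<beta> l1" by linarith
  have lo: "1 \<le> F_beta h0 \<beta> l1 * F_beta h1 \<beta> l1" using mult_mono[OF f0 f1] f0 by simp
  have "F_beta h0 \<beta> 3 \<le> 1/2" "F_beta h1 \<beta> 3 \<le> 1/2" "0 \<le> F_beta h1 \<beta> 3"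
    using F_beta_le[OF p0, of \<beta> 3] F_beta_le[OF p1, of \<beta> 3] F_beta_pos[OF p1, of \<beta> 3] b by auto
  hence up: "F_beta h0 \<beta> 3 * F_beta h1 \<beta> 3 \<le> 1"
    using mult_mono[of "F_beta h0 \<beta> 3" "1/2" "F_beta h1 \<beta> 3" "1/2"] by simp
  have "\<forall>x. l1 \<le> x \<and> x \<le> 3 \<longrightarrow> isCont (\<lambda>l. F_beta h0 \<beta> l * F_beta h1 \<beta> l) x"
    using isCont_F_beta[OF p0] isCont_F_beta[OF p1] b l1 by (auto intro!: isCont_mult)
  then obtain x where "l1 \<le> x" "F_beta h0 \<beta> x * F_beta h1 \<beta> x = 1"
    using IVT2[of "\<lambda>l. F_beta h0 \<beta> l * F_beta h1 \<beta> l" 3 1 l1] up lo l1 by auto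
  thus ?thesis using l1 by (intro exI[of _ x]) auto
qed

section \<open>An explicit eigenfunction\<close>

definition prepend_rep :: "bool \<Rightarrow> nat \<Rightarrow> seq \<Rightarrow> seq" where
  "prepend_rep a j x = (\<lambda>n. if n < j then a else x (n - j))"

definition eigen_sum :: "(seq \<Rightarrow> real) \<Rightarrow> real \<Rightarrow> real \<Rightarrow> seq \<Rightarrow> real" where
  "eigen_sum H \<beta> l x = (\<Sum>j. (1/l)^Suc j * exp (- \<beta> * H (scons (\<not> x 0) (prepend_rep (x 0) j x))))"

lemma scons_0 [simp]: "scons b x 0 = b" and scons_Suc [simp]: "scons b x (Suc n) = x n"
  unfolding scons_def by auto

lemma prepend_rep_0 [simp]: "prepend_rep a 0 x = x" unfolding prepend_rep_def by auto

lemma prepend_rep_scons: "prepend_rep a j (scons a x) = prepend_rep a (Suc j) x"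
proof (rule ext)
  fix n show "prepend_rep a j (scons a x) n = prepend_rep a (Suc j) x n"
  proof (cases "n \<le> j")
    case True thus ?thesis by (auto simp: prepend_rep_def scons_def)
  next
    case False
    hence "n - j = Suc (n - Suc j)" by simp
    thus ?thesis using False by (simp add: prepend_rep_def scons_def)
  qed
qed

lemma mem_cyl_block:
  assumes "z 0 = b" "\<forall>i<n. z (Suc i) = c" "z (Suc n) = d"
  shows "z \<in> cyl ([b] @ replicate n c @ [d])"
  unfolding cyl_def
proof (intro CollectI allI impI)
  fix i assume i: "i < length ([b] @ replicate n c @ [d])"
  show "z i = ([b] @ replicate n c @ [d]) ! i"
  proof (cases i)
    case 0 thus ?thesis using assms by simp
  next
    case (Suc k)
    hence "k < n \<or> k = n" using i by auto
    thus ?thesis using assms Suc by (auto simp: nth_append)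
  qed
qed

lemma abs_diff_le_var_n:
  assumes "summable_variation H" "\<forall>i<n. x i = y i"
  shows "\<bar>H x - H y\<bar> \<le> var_n H n"
proof -
  have "bdd_above ((\<lambda>p. \<bar>H (fst p) - H (snd p)\<bar>) ` {(x, y). \<forall>i<n. x i = y i})"
    using assms(1) unfolding summable_variation_def by auto
  moreover have "(x, y) \<in> {(x, y). \<forall>i<n. x i = y i}" using assms(2) by auto
  ultimately show ?thesis unfolding var_n_def
    using cSUP_upper[of "(x,y)" "{(x, y). \<forall>i<n. x i = y i}" "\<lambda>p. \<bar>H (fst p) - H (snd p)\<bar>"] by simp
qed

lemma var_n_LIMSEQ_0:
  assumes "summable_variation H" shows "var_n H \<longlonglongrightarrow> 0"
  using assms unfolding summable_variation_def by (auto intro: summable_LIMSEQ_zero)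

lemma abs_exp_diff_le_nonpos:
  fixes u v :: real assumes "u \<le> 0" "v \<le> 0"
  shows "\<bar>exp u - exp v\<bar> \<le> \<bar>u - v\<bar>"
proof -
  have *: "exp t - exp s \<le> t - s" if "s \<le> t" "t \<le> 0" for s t :: real
  proof -
    have "exp t - exp s = exp t * (1 - exp (s - t))" by (simp add: algebra_simps exp_diff)
    also have "\<dots> \<le> (1 - exp (s - t))"
      using that by (intro mult_left_le_one_le) auto
    also have "\<dots> \<le> t - s" using exp_ge_add_one_self[of "s - t"] by linarith
    finally show ?thesis .
  qed
  show ?thesis
  proof (cases "u \<le> v")
    case True thus ?thesis using *[of u v] assms by auto
  next
    case False thus ?thesis using *[of v u] assms by auto
  qed
qed

lemma exp_neg_mult_le_add:
  fixes u v \<beta> :: real assumes "0 \<le> u" "0 \<le> v" "0 \<le> \<beta>"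
  shows "exp (- \<beta> * u) \<le> exp (- \<beta> * v) + \<beta> * \<bar>u - v\<bar>"
proof -
  have "\<bar>exp (- \<beta> * u) - exp (- \<beta> * v)\<bar> \<le> \<bar>- \<beta> * u - - \<beta> * v\<bar>"
    using assms by (intro abs_exp_diff_le_nonpos) auto
  also have "- \<beta> * u - - \<beta> * v = \<beta> * (v - u)" by (simp add: algebra_simps)
  hence "\<bar>- \<beta> * u - - \<beta> * v\<bar> = \<beta> * \<bar>u - v\<bar>" using assms by (simp add: abs_mult abs_minus_commute)
  finally show ?thesis by linarith
qed

lemma summable_eigen_sum_terms:
  fixes H :: "seq \<Rightarrow> real" and \<beta> l :: real
  assumes "\<forall>x. 0 \<le> H x" "0 \<le> \<beta>" "1 < l"
  shows "summable (\<lambda>j. (1/l)^Suc j * exp (- \<beta> * H (z j)))"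
  by (rule summable_geometric_Suc_mult_bounded) (use assms in \<open>auto simp: mult_nonneg_nonneg\<close>)

lemma eigen_sum_pos:
  fixes H :: "seq \<Rightarrow> real" and \<beta> l :: real
  assumes "\<forall>x. 0 \<le> H x" "0 \<le> \<beta>" "1 < l"
  shows "0 < eigen_sum H \<beta> l x"
  unfolding eigen_sum_def by (rule suminf_pos[OF summable_eigen_sum_terms[OF assms]]) (use assms in simp)

lemma eigen_sum_le_add_var_n:
  assumes H0: "\<forall>x. 0 \<le> H x" and sv: "summable_variation H" and b: "0 \<le> \<beta>" and l: "1 < l"
    and agree: "\<forall>i<Suc N. y i = x i"
  shows "eigen_sum H \<beta> l y \<le> eigen_sum H \<beta> l x + \<beta> * var_n H (Suc N) / (l - 1)"
proof -
  define V where "V = var_n H (Suc N)"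
  have y0: "y 0 = x 0" using agree by auto
  define zy where "zy = (\<lambda>j. scons (\<not> x 0) (prepend_rep (x 0) j y))"
  define zx where "zx = (\<lambda>j. scons (\<not> x 0) (prepend_rep (x 0) j x))"
  have "\<forall>i<Suc N. zy j i = zx j i" for j
  proof (intro allI impI)
    fix i assume "i < Suc N"
    thus "zy j i = zx j i" unfolding zy_def zx_def by (cases i) (auto simp: prepend_rep_def agree)
  qed
  hence Hd: "\<bar>H (zy j) - H (zx j)\<bar> \<le> V" for j unfolding V_def by (rule abs_diff_le_var_n[OF sv])
  define ty where "ty = (\<lambda>j. (1/l)^Suc j * exp (- \<beta> * H (zy j)))"
  define tx where "tx = (\<lambda>j. (1/l)^Suc j * exp (- \<beta> * H (zx j)))"
  have Sy: "eigen_sum H \<beta> l y = suminf ty" unfolding eigen_sum_def ty_def zy_def y0 ..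
  have Sx: "eigen_sum H \<beta> l x = suminf tx" unfolding eigen_sum_def tx_def zx_def ..
  have sy: "summable ty" unfolding ty_def by (rule summable_eigen_sum_terms[OF H0 b l])
  have sx: "summable tx" unfolding tx_def by (rule summable_eigen_sum_terms[OF H0 b l])
  have le: "ty j \<le> tx j + (1/l)^Suc j * (\<beta> * V)" for j
  proof -
    have "exp (- \<beta> * H (zy j)) \<le> exp (- \<beta> * H (zx j)) + \<beta> * \<bar>H (zy j) - H (zx j)\<bar>"
      using H0 b by (intro exp_neg_mult_le_add) auto
    also have "\<dots> \<le> exp (- \<beta> * H (zx j)) + \<beta> * V" using Hd[of j] b by (simp add: mult_left_mono)
    finally have "exp (- \<beta> * H (zy j)) \<le> exp (- \<beta> * H (zx j)) + \<beta> * V" .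
    from mult_left_mono[OF this, of "(1/l)^Suc j"] l show ?thesis
      unfolding ty_def tx_def by (simp add: distrib_left)
  qed
  have g: "(\<lambda>j. (1/l)^Suc j * (\<beta> * V)) sums (1/(l-1) * (\<beta> * V))"
    by (rule sums_mult2[OF sums_geometric_Suc[OF l]])
  have sums: "(\<lambda>j. tx j + (1/l)^Suc j * (\<beta> * V)) sums (suminf tx + 1/(l-1) * (\<beta> * V))"
    by (rule sums_add[OF summable_sums[OF sx] g])
  have "suminf ty \<le> suminf tx + 1/(l-1) * (\<beta> * V)"
    unfolding sums_unique[OF sums] by (rule suminf_le[OF le sy sums_summable[OF sums]])
  thus ?thesis unfolding Sy Sx V_def by simp
qed

lemma eigen_sum_local_continuity:
  assumes H0: "\<forall>x. 0 \<le> H x" and sv: "summable_variation H" and b: "0 < \<beta>" and l: "1 < l"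
    and e: "0 < e"
  shows "\<exists>N\<ge>1. \<forall>y. (\<forall>i<N. y i = x i) \<longrightarrow> \<bar>eigen_sum H \<beta> l y - eigen_sum H \<beta> l x\<bar> < e"
proof -
  define \<delta> where "\<delta> = e * (l - 1) / \<beta>"
  have "0 < \<delta>" unfolding \<delta>_def using e b l by simp
  then obtain N where "\<forall>n\<ge>N. norm (var_n H n - 0) < \<delta>"
    using LIMSEQ_D[OF var_n_LIMSEQ_0[OF sv]] by blast
  hence "\<bar>var_n H (Suc N)\<bar> < \<delta>" by simp
  hence "\<beta> * var_n H (Suc N) < \<beta> * \<delta>" using b by (simp add: abs_less_iff)
  hence V: "\<beta> * var_n H (Suc N) / (l - 1) < e" unfolding \<delta>_def using b l by (simp add: divide_less_eq)
  have "\<bar>eigen_sum H \<beta> l y - eigen_sum H \<beta> l x\<bar> < e" if yx: "\<forall>i<Suc N. y i = x i" for y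
  proof -
    have "\<forall>i<Suc N. x i = y i" using yx by simp
    thus ?thesis using eigen_sum_le_add_var_n[OF H0 sv _ l yx] eigen_sum_le_add_var_n[OF H0 sv _ l] b V
      by (smt (verit))
  qed
  thus ?thesis by (intro exI[of _ "Suc N"]) auto
qed


definition eigenfunction :: "(seq \<Rightarrow> real) \<Rightarrow> (nat \<Rightarrow> real) \<Rightarrow> real \<Rightarrow> real \<Rightarrow> seq \<Rightarrow> real" where
  "eigenfunction H h0 \<beta> l x = (if x 0 then 1 else F_beta h0 \<beta> l) * eigen_sum H \<beta> l x"

lemma H_scons_diagonal:
  assumes "reduced_double_well H h0 h1" "x 0 = a"
  shows "H (scons a x) = 0"
proof -
  have "scons a x \<in> cyl [False, False] \<union> cyl [True, True]"
    using assms(2) unfolding cyl_def by (cases a) (auto simp: less_Suc_eq)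
  thus ?thesis using assms(1) unfolding reduced_double_well_def by blast
qed

lemma H_scons_block:
  assumes "reduced_double_well H h0 h1" "x 0 = a"
  shows "H (scons a (prepend_rep (\<not> a) (Suc j) x)) = (if a then h1 else h0) (Suc j)"
proof -
  let ?z = "scons a (prepend_rep (\<not> a) (Suc j) x)"
  have mem: "?z \<in> cyl ([a] @ replicate (Suc j) (\<not> a) @ [a])"
    by (rule mem_cyl_block) (use assms(2) in \<open>auto simp: prepend_rep_def\<close>)
  show ?thesis using mem assms(1) unfolding reduced_double_well_def
    by (cases a) (metis One_nat_def Suc_le_mono le0)+
qed

lemma eigen_sum_scons_other:
  assumes "reduced_double_well H h0 h1" "x 0 = a"
  shows "eigen_sum H \<beta> l (scons (\<not> a) x) = F_beta (if a then h1 else h0) \<beta> l"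
proof -
  have "eigen_sum H \<beta> l (scons (\<not> a) x) = (\<Sum>j. (1/l)^Suc j * exp (- \<beta> * H (scons a (prepend_rep (\<not> a) (Suc j) x))))"
    unfolding eigen_sum_def by (simp add: prepend_rep_scons)
  also have "\<dots> = F_beta (if a then h1 else h0) \<beta> l"
    unfolding F_beta_def using H_scons_block[of H h0 h1 x a, OF assms] by simp
  finally show ?thesis .
qed

lemma eigen_sum_scons_same:
  fixes H :: "seq \<Rightarrow> real" and \<beta> l :: real
  assumes H0: "\<forall>x. 0 \<le> H x" and b: "0 \<le> \<beta>" and l: "1 < l" and x0: "x 0 = a"
  shows "eigen_sum H \<beta> l (scons a x) = l * eigen_sum H \<beta> l x - exp (- \<beta> * H (scons (\<not> a) x))"
proof -
  define E where "E = (\<lambda>j. exp (- \<beta> * H (scons (\<not> a) (prepend_rep a j x))))"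
  define t where "t = (\<lambda>j. (1/l)^Suc j * E j)"
  have st: "summable t" unfolding t_def E_def by (rule summable_eigen_sum_terms[OF H0 b l])
  have sum_x: "eigen_sum H \<beta> l x = suminf t" unfolding eigen_sum_def t_def E_def x0 ..
  have "eigen_sum H \<beta> l (scons a x) = (\<Sum>j. (1/l)^Suc j * E (Suc j))"
    unfolding eigen_sum_def E_def by (simp add: prepend_rep_scons)
  also have "\<dots> = (\<Sum>j. l * t (Suc j))"
    unfolding t_def using l by (intro suminf_cong) (simp add: field_simps)
  also have "\<dots> = l * (\<Sum>j. t (Suc j))"
    by (rule suminf_mult) (use st in \<open>simp add: summable_Suc_iff\<close>)
  also have "\<dots> = l * (suminf t - t 0)" by (simp add: suminf_split_head[OF st])
  also have "\<dots> = l * eigen_sum H \<beta> l x - exp (- \<beta> * H (scons (\<not> a) x))"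
    unfolding sum_x t_def E_def using l by (simp add: field_simps)
  finally show ?thesis .
qed

lemma transfer_op_eigenfunction:
  assumes rdw: "reduced_double_well H h0 h1" and b: "0 \<le> \<beta>" and l: "1 < l"
    and F: "F_beta h0 \<beta> l * F_beta h1 \<beta> l = 1"
  shows "transfer_op H \<beta> (eigenfunction H h0 \<beta> l) x = l * eigenfunction H h0 \<beta> l x"
proof -
  have H0: "\<forall>x. 0 \<le> H x" using rdw unfolding reduced_double_well_def by auto
  show ?thesis
  proof (cases "x 0")
    case True
    have a: "H (scons True x) = 0" using H_scons_diagonal[OF rdw, of x True] True by simp
    have s1: "eigen_sum H \<beta> l (scons True x) = l * eigen_sum H \<beta> l x - exp (- \<beta> * H (scons False x))"
      using eigen_sum_scons_same[OF H0 b l, of x True] True by simp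
    have s2: "eigen_sum H \<beta> l (scons False x) = F_beta h1 \<beta> l" using eigen_sum_scons_other[OF rdw, of x True] True by simp
    show ?thesis unfolding transfer_op_def eigenfunction_def scons_0 a s1 s2 using True F
      by (simp add: algebra_simps)
  next
    case False
    have a: "H (scons False x) = 0" using H_scons_diagonal[OF rdw, of x False] False by simp
    have s1: "eigen_sum H \<beta> l (scons False x) = l * eigen_sum H \<beta> l x - exp (- \<beta> * H (scons True x))"
      using eigen_sum_scons_same[OF H0 b l, of x False] False by simp
    have s2: "eigen_sum H \<beta> l (scons True x) = F_beta h0 \<beta> l" using eigen_sum_scons_other[OF rdw, of x False] False by simp
    show ?thesis unfolding transfer_op_def eigenfunction_def scons_0 a s1 s2 using False
      by (simp add: algebra_simps)
  qed
qed

section \<open>Uniqueness of the eigenvalue\<close>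

text \<open>Compactness of \<open>{0,1}\<^sup>\<nat>\<close> in the form of Koenig's lemma: a property of cylinders
  (\<open>G x n\<close>: it holds on the cylinder of the first \<open>n\<close> symbols of \<open>x\<close>) that holds on all
  sufficiently small cylinders and passes from the two halves of a cylinder to the cylinder
  itself holds on the whole space.\<close>

lemma fan_principle:
  fixes G :: "seq \<Rightarrow> nat \<Rightarrow> bool"
  assumes agree: "\<And>x y n. (\<forall>i<n. x i = y i) \<Longrightarrow> G x n \<Longrightarrow> G y n"
    and split: "\<And>x n. G x (Suc n) \<Longrightarrow> G (x(n := \<not> x n)) (Suc n) \<Longrightarrow> G x n"
    and loc: "\<And>x. \<exists>N. G x N"
  shows "G x0 0"
proof (rule ccontr)
  assume bad0: "\<not> G x0 0"
  have step: "\<exists>z'. (\<forall>i<n. z' i = z i) \<and> \<not> G z' (Suc n)" if "\<not> G z n" for z n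
  proof (cases "G z (Suc n)")
    case True
    hence "\<not> G (z(n := \<not> z n)) (Suc n)" using split that by blast
    thus ?thesis by (intro exI[of _ "z(n := \<not> z n)"]) auto
  next
    case False thus ?thesis by blast
  qed
  define Z where "Z = rec_nat x0 (\<lambda>n z. SOME z'. (\<forall>i<n. z' i = z i) \<and> \<not> G z' (Suc n))"
  have Z0: "Z 0 = x0" unfolding Z_def by simp
  have ZS: "Z (Suc n) = (SOME z'. (\<forall>i<n. z' i = Z n i) \<and> \<not> G z' (Suc n))" for n
    unfolding Z_def by simp
  have inv: "\<not> G (Z n) n \<and> (\<forall>i<n. Z (Suc n) i = Z n i) \<and> \<not> G (Z (Suc n)) (Suc n)" for n
  proof (induction n)
    case 0
    have "\<exists>z'. (\<forall>i<0. z' i = Z 0 i) \<and> \<not> G z' (Suc 0)" using step[of "Z 0" 0] bad0 Z0 by simp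
    from someI_ex[OF this] show ?case using bad0 Z0 ZS[of 0] by simp
  next
    case (Suc n)
    hence "\<not> G (Z (Suc n)) (Suc n)" by blast
    from someI_ex[OF step[OF this]] show ?case using Suc ZS[of "Suc n"] by simp
  qed
  have agreeZ: "\<forall>i<n. Z m i = Z n i" if "n \<le> m" for n m
    using that
  proof (induction m)
    case 0 thus ?case by simp
  next
    case (Suc m)
    show ?case
    proof (cases "n \<le> m")
      case True thus ?thesis using Suc inv[of m] by auto
    next
      case False hence "n = Suc m" using Suc by simp
      thus ?thesis by simp
    qed
  qed
  define w where "w = (\<lambda>i. Z (Suc i) i)"
  have wZ: "\<forall>i<n. w i = Z n i" for n
  proof (intro allI impI)
    fix i assume "i < n"
    thus "w i = Z n i" unfolding w_def using agreeZ[of "Suc i" n] by auto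
  qed
  obtain N where "G w N" using loc by blast
  hence "G (Z N) N" using agree wZ by blast
  thus False using inv[of N] by blast
qed

lemma seq_continuous_pos_bounds:
  assumes c: "seq_continuous f" and p: "\<forall>x. 0 < f x"
  shows "\<exists>c M. 0 < c \<and> (\<forall>x. c \<le> f x \<and> f x \<le> M)"
proof -
  define G where "G = (\<lambda>x n. \<exists>c M. 0 < c \<and> (\<forall>y. (\<forall>i<n. y i = x i) \<longrightarrow> c \<le> f y \<and> f y \<le> M))"
  have "G x 0" for x
  proof (rule fan_principle[where G=G])
    fix x y :: seq and n assume a: "\<forall>i<n. x i = y i" and gx: "G x n"
    from gx obtain c M where cm: "0 < c" "\<forall>y'. (\<forall>i<n. y' i = x i) \<longrightarrow> c \<le> f y' \<and> f y' \<le> M"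
      unfolding G_def by blast
    have "\<forall>y'. (\<forall>i<n. y' i = y i) \<longrightarrow> c \<le> f y' \<and> f y' \<le> M"
    proof (intro allI impI)
      fix y' assume "\<forall>i<n. y' i = y i"
      hence "\<forall>i<n. y' i = x i" using a by simp
      thus "c \<le> f y' \<and> f y' \<le> M" using cm(2) by blast
    qed
    thus "G y n" unfolding G_def using cm(1) by (intro exI[of _ c] exI[of _ M] conjI)
  next
    fix x :: seq and n assume g1: "G x (Suc n)" and g2: "G (x(n := \<not> x n)) (Suc n)"
    obtain c1 M1 where c1: "0 < c1" "\<forall>y. (\<forall>i<Suc n. y i = x i) \<longrightarrow> c1 \<le> f y \<and> f y \<le> M1"
      using g1 unfolding G_def by blast
    obtain c2 M2 where c2: "0 < c2" "\<forall>y. (\<forall>i<Suc n. y i = (x(n := \<not> x n)) i) \<longrightarrow> c2 \<le> f y \<and> f y \<le> M2"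
      using g2 unfolding G_def by blast
    have "min c1 c2 \<le> f y \<and> f y \<le> max M1 M2" if "\<forall>i<n. y i = x i" for y
    proof (cases "y n = x n")
      case True
      have "\<forall>i<Suc n. y i = x i"
      proof (intro allI impI)
        fix i assume "i < Suc n" thus "y i = x i" using that True by (cases "i = n") auto
      qed
      hence "c1 \<le> f y \<and> f y \<le> M1" using c1(2) by blast
      thus ?thesis by linarith
    next
      case False
      have "\<forall>i<Suc n. y i = (x(n := \<not> x n)) i"
      proof (intro allI impI)
        fix i assume "i < Suc n" thus "y i = (x(n := \<not> x n)) i" using that False by (cases "i = n") auto
      qed
      hence "c2 \<le> f y \<and> f y \<le> M2" using c2(2) by blast
      thus ?thesis by linarith
    qed
    moreover have "0 < min c1 c2" using c1(1) c2(1) by simp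
    ultimately show "G x n" unfolding G_def by (intro exI[of _ "min c1 c2"] exI[of _ "max M1 M2"] conjI) auto
  next
    fix x
    have fx: "0 < f x / 2" using p by simp
    obtain N where N: "\<forall>y. (\<forall>i<N. y i = x i) \<longrightarrow> \<bar>f y - f x\<bar> < f x / 2"
      using c[unfolded seq_continuous_def, rule_format, OF fx] by blast
    have "f x / 2 \<le> f y \<and> f y \<le> 2 * f x" if "\<forall>i<N. y i = x i" for y
    proof -
      have "\<bar>f y - f x\<bar> < f x / 2" using N that by blast
      hence "f x - f y < f x / 2" "f y - f x < f x / 2" by linarith+
      thus ?thesis using p[rule_format, of x] by linarith
    qed
    hence "G x N" unfolding G_def using fx by (intro exI[of _ "f x / 2"] exI[of _ "2 * f x"] conjI) auto
    thus "\<exists>N. G x N" by blast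
  qed
  from this[of undefined] obtain c M where "0 < c" "\<forall>y. (\<forall>i<0. y i = undefined i) \<longrightarrow> c \<le> f y \<and> f y \<le> M"
    unfolding G_def by blast
  thus ?thesis by auto
qed

lemma transfer_op_mono:
  assumes "\<forall>x. f x \<le> g x"
  shows "transfer_op H \<beta> f x \<le> transfer_op H \<beta> g x"
  unfolding transfer_op_def using assms by (intro add_mono mult_left_mono) auto

lemma transfer_op_scale:
  "transfer_op H \<beta> (\<lambda>x. c * f x) x = c * transfer_op H \<beta> f x"
  unfolding transfer_op_def by (simp add: algebra_simps)

lemma transfer_op_pos:
  assumes "\<forall>x. 0 < f x" shows "0 < transfer_op H \<beta> f x"
  unfolding transfer_op_def using assms by (intro add_pos_pos mult_pos_pos) auto

lemma eigenvalue_le: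
  assumes cP: "seq_continuous P" and pP: "\<forall>x. 0 < P x" and eP: "\<forall>x. transfer_op H \<beta> P x = l * P x"
    and cQ: "seq_continuous Q" and pQ: "\<forall>x. 0 < Q x" and eQ: "\<forall>x. transfer_op H \<beta> Q x = \<mu> * Q x"
  shows "\<mu> \<le> l"
proof (rule ccontr)
  assume "\<not> \<mu> \<le> l" hence ml: "l < \<mu>" by simp
  obtain cP MP where P: "0 < cP" "\<forall>x. cP \<le> P x \<and> P x \<le> MP" using seq_continuous_pos_bounds[OF cP pP] by blast
  obtain cQ MQ where Q: "0 < cQ" "\<forall>x. cQ \<le> Q x \<and> Q x \<le> MQ" using seq_continuous_pos_bounds[OF cQ pQ] by blast
  fix x0 :: seq
  have "0 < l * P x0" using transfer_op_pos[OF pP, of H \<beta> x0] eP by simp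
  hence lpos: "0 < l" using pP[rule_format, of x0] by (simp add: zero_less_mult_iff)
  have "cQ \<le> Q x0" "Q x0 \<le> MQ" using Q(2) by auto
  hence MQ: "0 < MQ" using Q(1) by linarith
  define C where "C = MQ / cP"
  have C: "0 < C" unfolding C_def using MQ P by simp
  have base: "Q x \<le> C * P x" for x
  proof -
    have "Q x \<le> MQ" using Q by blast
    also have "MQ = C * cP" unfolding C_def using P by simp
    also have "\<dots> \<le> C * P x" using C P by (intro mult_left_mono) auto
    finally show ?thesis .
  qed
  have ind: "\<forall>x. \<mu>^n * Q x \<le> C * l^n * P x" for n
  proof (induction n)
    case 0 thus ?case using base by simp
  next
    case (Suc n)
    show ?case
    proof
      fix x
      have "\<mu>^Suc n * Q x = \<mu>^n * (\<mu> * Q x)" by simp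
      also have "\<dots> = \<mu>^n * transfer_op H \<beta> Q x" using eQ by simp
      also have "\<dots> = transfer_op H \<beta> (\<lambda>y. \<mu>^n * Q y) x" by (simp add: transfer_op_scale)
      also have "\<dots> \<le> transfer_op H \<beta> (\<lambda>y. C * l^n * P y) x" by (rule transfer_op_mono) (use Suc in auto)
      also have "\<dots> = C * l^n * transfer_op H \<beta> P x" by (simp add: transfer_op_scale)
      also have "\<dots> = C * l^Suc n * P x" using eP by simp
      finally show "\<mu>^Suc n * Q x \<le> C * l^Suc n * P x" .
    qed
  qed
  have "(\<mu>/l)^n \<le> C * MP / cQ" for n
  proof -
    have "\<mu>^n * cQ \<le> \<mu>^n * Q x0" using Q ml lpos by (intro mult_left_mono) auto
    also have "\<dots> \<le> C * l^n * P x0" using ind by blast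
    also have "\<dots> \<le> C * l^n * MP" using P C lpos by (intro mult_left_mono) auto
    finally have "\<mu>^n * cQ \<le> C * l^n * MP" .
    hence "\<mu>^n * cQ / l^n \<le> C * l^n * MP / l^n" using lpos by (intro divide_right_mono) auto
    also have "C * l^n * MP / l^n = C * MP" using lpos by simp
    also have "\<mu>^n * cQ / l^n = (\<mu>/l)^n * cQ" by (simp add: power_divide)
    finally show ?thesis using Q(1) by (simp add: pos_le_divide_eq)
  qed
  moreover obtain n where "C * MP / cQ < (\<mu>/l)^n" using real_arch_pow[of "\<mu>/l" "C * MP / cQ"] ml lpos by auto
  ultimately show False by (meson not_le)
qed

lemma reduced_double_wellD:
  assumes "reduced_double_well H h0 h1"
  shows "\<forall>x. 0 \<le> H x" "summable_variation H" "\<forall>k\<ge>1. 0 < h0 k" "\<forall>k\<ge>1. 0 < h1 k"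
    "h0 \<longlonglongrightarrow> H_inf h0" "h1 \<longlonglongrightarrow> H_inf h1"
  using assms tail_summable_imp_LIMSEQ unfolding reduced_double_well_def by auto

lemma eigenfunction_pos:
  assumes rdw: "reduced_double_well H h0 h1" and b: "0 < \<beta>" and l: "1 < l"
  shows "0 < eigenfunction H h0 \<beta> l x"
proof -
  note R = reduced_double_wellD[OF rdw]
  have "0 < F_beta h0 \<beta> l" using F_beta_pos[OF _ _ l] R(3) b by (simp add: less_imp_le)
  thus ?thesis unfolding eigenfunction_def using eigen_sum_pos[OF R(1) _ l] b by simp
qed

lemma seq_continuous_eigenfunction:
  assumes rdw: "reduced_double_well H h0 h1" and b: "0 < \<beta>" and l: "1 < l"
  shows "seq_continuous (eigenfunction H h0 \<beta> l)"
  unfolding seq_continuous_def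
proof (intro allI impI)
  fix x and e :: real assume e: "0 < e"
  note R = reduced_double_wellD[OF rdw]
  define C where "C = (\<lambda>x::seq. if x 0 then 1 else F_beta h0 \<beta> l)"
  have C: "0 < C x" for x
    unfolding C_def using F_beta_pos[OF _ _ l] R(3) b by (simp add: less_imp_le)
  have P: "eigenfunction H h0 \<beta> l x = C x * eigen_sum H \<beta> l x" for x
    unfolding eigenfunction_def C_def ..
  obtain N where N: "N \<ge> 1"
    "\<forall>y. (\<forall>i<N. y i = x i) \<longrightarrow> \<bar>eigen_sum H \<beta> l y - eigen_sum H \<beta> l x\<bar> < e / C x"
    using eigen_sum_local_continuity[OF R(1) R(2) b l, of "e / C x" x] e C[of x] by auto
  have "\<bar>eigenfunction H h0 \<beta> l y - eigenfunction H h0 \<beta> l x\<bar> < e" if "\<forall>i<N. y i = x i" for y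
  proof -
    have "y 0 = x 0" using that N(1) by auto
    hence Cy: "C y = C x" unfolding C_def by simp
    have "\<bar>eigenfunction H h0 \<beta> l y - eigenfunction H h0 \<beta> l x\<bar>
        = C x * \<bar>eigen_sum H \<beta> l y - eigen_sum H \<beta> l x\<bar>"
      unfolding P Cy using C[of x] by (simp add: abs_mult right_diff_distrib[symmetric])
    also have "\<dots> < C x * (e / C x)" using N(2) that C[of x] by (intro mult_strict_left_mono) auto
    also have "\<dots> = e" using C[of x] by simp
    finally show ?thesis .
  qed
  thus "\<exists>N. \<forall>y. (\<forall>i<N. y i = x i) \<longrightarrow> \<bar>eigenfunction H h0 \<beta> l y - eigenfunction H h0 \<beta> l x\<bar> < e"
    by blast
qed

lemma lambda_beta_root:
  assumes rdw: "reduced_double_well H h0 h1" and b: "0 < \<beta>"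
  shows "1 < lambda_beta H \<beta> \<and> F_beta h0 \<beta> (lambda_beta H \<beta>) * F_beta h1 \<beta> (lambda_beta H \<beta>) = 1"
proof -
  note R = reduced_double_wellD[OF rdw]
  have h0: "\<forall>k\<ge>1. 0 \<le> h0 k" using R(3) by (auto intro: less_imp_le)
  have h1: "\<forall>k\<ge>1. 0 \<le> h1 k" using R(4) by (auto intro: less_imp_le)
  obtain l where l: "1 < l" "F_beta h0 \<beta> l * F_beta h1 \<beta> l = 1"
    using F_beta_product_eq_1_solvable[OF h0 h1 R(5) R(6) b] by blast
  have PP: "\<forall>x. 0 < eigenfunction H h0 \<beta> l x" "seq_continuous (eigenfunction H h0 \<beta> l)"
    using eigenfunction_pos[OF rdw b l(1)] seq_continuous_eigenfunction[OF rdw b l(1)] by auto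
  have eig: "\<forall>x. transfer_op H \<beta> (eigenfunction H h0 \<beta> l) x = l * eigenfunction H h0 \<beta> l x"
    using transfer_op_eigenfunction[OF rdw _ l] b by auto
  let ?P = "\<lambda>l. \<exists>\<Phi>. seq_continuous \<Phi> \<and> (\<forall>x. 0 < \<Phi> x) \<and> (\<forall>x. transfer_op H \<beta> \<Phi> x = l * \<Phi> x)"
  have "?P l" using PP eig by blast
  moreover have "l' = l" if "?P l'" for l'
  proof -
    from that obtain \<Psi> where \<Psi>: "seq_continuous \<Psi>" "\<forall>x. 0 < \<Psi> x" "\<forall>x. transfer_op H \<beta> \<Psi> x = l' * \<Psi> x"
      by blast
    have "l' \<le> l" by (rule eigenvalue_le[OF PP(2) PP(1) eig \<Psi>])
    moreover have "l \<le> l'" by (rule eigenvalue_le[OF \<Psi> PP(2) PP(1) eig])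
    ultimately show ?thesis by simp
  qed
  ultimately have "lambda_beta H \<beta> = l" unfolding lambda_beta_def by (rule the_equality)
  thus ?thesis using l by simp
qed


section \<open>Exponential rates\<close>

abbreviation exp_rate :: "real \<Rightarrow> real \<Rightarrow> real" where
  "exp_rate \<beta> X \<equiv> - (1 / \<beta>) * ln X"

lemma exp_rate_ge:
  fixes X C \<beta> u \<eta> :: real
  assumes "0 < X" "0 < \<beta>" "0 < C" "X \<le> C * exp (- \<beta> * u)" "ln C \<le> \<beta> * \<eta>"
  shows "u - \<eta> \<le> exp_rate \<beta> X"
proof -
  have "ln X \<le> ln (C * exp (- \<beta> * u))" using assms by simp
  also have "\<dots> = ln C - \<beta> * u" using assms by (simp add: ln_mult)
  finally have "\<beta> * (u - \<eta>) \<le> - ln X" using assms(5) by (simp add: algebra_simps)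
  hence "u - \<eta> \<le> (- ln X) / \<beta>" by (subst pos_le_divide_eq[OF assms(2)]) (simp add: mult.commute)
  thus ?thesis by simp
qed

lemma exp_rate_le:
  fixes X c \<beta> u \<eta> :: real
  assumes "0 < \<beta>" "0 < c" "c * exp (- \<beta> * u) \<le> X" "- ln c \<le> \<beta> * \<eta>"
  shows "exp_rate \<beta> X \<le> u + \<eta>"
proof -
  have cp: "0 < c * exp (- \<beta> * u)" using assms(2) by simp
  hence "ln (c * exp (- \<beta> * u)) \<le> ln X" using assms(3) by simp
  moreover have "ln (c * exp (- \<beta> * u)) = ln c - \<beta> * u" using assms by (simp add: ln_mult)
  ultimately have "- ln X \<le> \<beta> * (u + \<eta>)" using assms(4) by (simp add: algebra_simps)
  hence "(- ln X) / \<beta> \<le> u + \<eta>" by (subst pos_divide_le_eq[OF assms(1)]) (simp add: mult.commute)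
  thus ?thesis by simp
qed

lemma add_exp_le_exp_min:
  fixes C1 C2 \<beta> x y :: real
  assumes "0 \<le> C1" "0 \<le> C2" "0 \<le> \<beta>"
  shows "C1 * exp (- \<beta> * x) + C2 * exp (- \<beta> * y) \<le> (C1 + C2) * exp (- \<beta> * min x y)"
proof -
  have "exp (- \<beta> * x) \<le> exp (- \<beta> * min x y)" "exp (- \<beta> * y) \<le> exp (- \<beta> * min x y)"
    using assms(3) by (auto simp: mult_left_mono)
  hence "C1 * exp (- \<beta> * x) + C2 * exp (- \<beta> * y)
      \<le> C1 * exp (- \<beta> * min x y) + C2 * exp (- \<beta> * min x y)"
    using assms by (intro add_mono mult_left_mono) auto
  thus ?thesis by (simp add: algebra_simps)
qed

lemma exp_div_power_eq:
  fixes l \<beta> a x :: real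
  assumes "l - 1 = exp (- \<beta> * a)"
  shows "exp (- \<beta> * x) / (l - 1)^n = exp (- \<beta> * (x - real n * a))"
proof -
  have "(l - 1)^n = exp (real n * (- \<beta> * a))" unfolding assms by (rule exp_of_nat_mult[symmetric])
  hence "exp (- \<beta> * x) / (l - 1)^n = exp (- \<beta> * x - real n * (- \<beta> * a))"
    by (simp only: exp_diff)
  thus ?thesis by (simp add: algebra_simps)
qed

lemma exp_rate_F_beta_le:
  fixes h :: "nat \<Rightarrow> real"
  assumes h0: "\<forall>k\<ge>1. 0 \<le> h k" and b: "0 < \<beta>" and l: "1 < l" "l \<le> 2"
    and a: "l - 1 = exp (- \<beta> * a)"
    and K: "1 \<le> K" "\<forall>k\<ge>K. h k \<le> L + \<eta>" and k: "1 \<le> k" "k \<le> K" "h k \<le> m + \<eta>"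
    and bK: "real K * ln 2 \<le> \<beta> * \<eta>"
  shows "exp_rate \<beta> (F_beta h \<beta> l) \<le> m + 2 * \<eta>"
    and "exp_rate \<beta> (F_beta h \<beta> l) \<le> L - a + 2 * \<eta>"
    and "exp_rate \<beta> (Ft_beta h \<beta> l) \<le> m + 2 * \<eta>"
    and "exp_rate \<beta> (Ft_beta h \<beta> l) \<le> L - 2 * a + 2 * \<eta>"
proof -
  have c: "0 < (1/2::real)^K" "- ln ((1/2::real)^K) \<le> \<beta> * \<eta>"
    using bK by (simp_all add: ln_realpow ln_div)
  note T = F_beta_ge_term[OF h0 _ l k, of \<beta>]
  note R = F_beta_ge_tail[OF h0 _ l K, of \<beta>] Ft_beta_ge_tail[OF h0 _ l K, of \<beta>]
  have E1: "exp (- \<beta> * (L + \<eta>)) / (l - 1) = exp (- \<beta> * (L + \<eta> - a))"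
    and E2: "exp (- \<beta> * (L + \<eta>)) / (l - 1)^2 = exp (- \<beta> * (L + \<eta> - 2 * a))"
    using exp_div_power_eq[OF a, of "L + \<eta>" 1] exp_div_power_eq[OF a, of "L + \<eta>" 2] by simp_all
  show "exp_rate \<beta> (F_beta h \<beta> l) \<le> m + 2 * \<eta>"
    using exp_rate_le[OF b c(1) T(1) c(2)] b by simp
  show "exp_rate \<beta> (Ft_beta h \<beta> l) \<le> m + 2 * \<eta>"
    using exp_rate_le[OF b c(1) T(2) c(2)] b by simp
  have "(1/2)^K * exp (- \<beta> * (L + \<eta> - a)) \<le> F_beta h \<beta> l"
    using R(1) b unfolding E1[symmetric] by simp
  from exp_rate_le[OF b c(1) this c(2)]
  show "exp_rate \<beta> (F_beta h \<beta> l) \<le> L - a + 2 * \<eta>" by simp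
  have "(1/2)^K * exp (- \<beta> * (L + \<eta> - 2 * a)) \<le> Ft_beta h \<beta> l"
    using R(2) b unfolding E2[symmetric] by simp
  from exp_rate_le[OF b c(1) this c(2)]
  show "exp_rate \<beta> (Ft_beta h \<beta> l) \<le> L - 2 * a + 2 * \<eta>" by simp
qed

lemma exp_rate_F_beta_ge:
  fixes h :: "nat \<Rightarrow> real"
  assumes hm: "\<forall>k\<ge>1. m \<le> h k" and m: "0 \<le> m" and b: "0 < \<beta>" and l: "1 < l" "l \<le> 2"
    and a: "l - 1 = exp (- \<beta> * a)"
    and K: "1 \<le> K" "\<forall>k\<ge>K. L - \<eta> \<le> h k" and bK: "ln (real K * real K + 2) \<le> \<beta> * \<eta>"
  shows "min m (L - a - \<eta>) - \<eta> \<le> exp_rate \<beta> (F_beta h \<beta> l)"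
    and "min m (L - 2 * a - \<eta>) - \<eta> \<le> exp_rate \<beta> (Ft_beta h \<beta> l)"
proof -
  have h0: "\<forall>k\<ge>1. 0 \<le> h k" using hm m by force
  note U = F_beta_le_head_tail[OF hm m less_imp_le[OF b] l(1) K(2)]
    Ft_beta_le_head_tail[OF hm m less_imp_le[OF b] l(1) K(2)]
  have "F_beta h \<beta> l \<le> real K * exp (- \<beta> * m) + 1 * exp (- \<beta> * (L - \<eta> - a))"
    using U(1) b exp_div_power_eq[OF a, of "L - \<eta>" 1] by simp
  also have "\<dots> \<le> (real K + 1) * exp (- \<beta> * min m (L - \<eta> - a))"
    using b by (intro add_exp_le_exp_min) auto
  finally have "F_beta h \<beta> l \<le> (real K + 1) * exp (- \<beta> * min m (L - \<eta> - a))" .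
  moreover have "ln (real K + 1) \<le> \<beta> * \<eta>"
  proof -
    have "real K * 1 \<le> real K * real K" using K by (intro mult_left_mono) auto
    hence "ln (real K + 1) \<le> ln (real K * real K + 2)" by simp
    thus ?thesis using bK by linarith
  qed
  ultimately have "min m (L - \<eta> - a) - \<eta> \<le> exp_rate \<beta> (F_beta h \<beta> l)"
    by (intro exp_rate_ge[where C = "real K + 1"] F_beta_pos[OF h0 _ l(1)]) (use b in auto)
  thus "min m (L - a - \<eta>) - \<eta> \<le> exp_rate \<beta> (F_beta h \<beta> l)" by (simp add: algebra_simps)
  have "exp (- \<beta> * (L - \<eta>)) * l / (l - 1)^2 = l * (exp (- \<beta> * (L - \<eta>)) / (l - 1)^2)"
    by simp
  also have "\<dots> = l * exp (- \<beta> * (L - \<eta> - 2 * a))"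
    using exp_div_power_eq[OF a, of "L - \<eta>" 2] by simp
  also have "\<dots> \<le> 2 * exp (- \<beta> * (L - \<eta> - 2 * a))" using l by (intro mult_right_mono) auto
  finally have "Ft_beta h \<beta> l \<le> real K * real K * exp (- \<beta> * m) + 2 * exp (- \<beta> * (L - \<eta> - 2 * a))"
    using U(2) by simp
  also have "\<dots> \<le> (real K * real K + 2) * exp (- \<beta> * min m (L - \<eta> - 2 * a))"
    using b by (intro add_exp_le_exp_min) auto
  finally have "Ft_beta h \<beta> l \<le> (real K * real K + 2) * exp (- \<beta> * min m (L - \<eta> - 2 * a))" .
  moreover have "0 < real K * real K + 2" by (simp add: add_nonneg_pos)
  ultimately have "min m (L - \<eta> - 2 * a) - \<eta> \<le> exp_rate \<beta> (Ft_beta h \<beta> l)"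
    using exp_rate_ge[OF Ft_beta_pos[OF h0 less_imp_le[OF b] l(1)] b _ _ bK] by blast
  thus "min m (L - 2 * a - \<eta>) - \<eta> \<le> exp_rate \<beta> (Ft_beta h \<beta> l)" by (simp add: algebra_simps)
qed

definition rate_near_min :: "real \<Rightarrow> real \<Rightarrow> real \<Rightarrow> real \<Rightarrow> real \<Rightarrow> bool" where
  "rate_near_min \<eta> m L d A \<longleftrightarrow>
     A \<le> m + 2 * \<eta> \<and> A \<le> L - d + 2 * \<eta> \<and> min m (L - d - \<eta>) - \<eta> \<le> A"

lemma exp_rates_F_beta_eventually:
  fixes h :: "nat \<Rightarrow> real"
  assumes pos: "\<forall>k\<ge>1. 0 < h k" and lim: "h \<longlonglongrightarrow> L" and eta: "0 < \<eta>"
  shows "eventually (\<lambda>\<beta>. \<forall>l a. 1 < l \<longrightarrow> l \<le> 2 \<longrightarrow> l - 1 = exp (- \<beta> * a) \<longrightarrow>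
      rate_near_min \<eta> (H_min h) L a (exp_rate \<beta> (F_beta h \<beta> l))
      \<and> rate_near_min \<eta> (H_min h) L (2 * a) (exp_rate \<beta> (Ft_beta h \<beta> l))) at_top"
proof -
  have h0: "\<forall>k\<ge>1. 0 \<le> h k" using pos by (auto intro: less_imp_le)
  obtain K0 where K0: "1 \<le> K0" "\<forall>k\<ge>K0. \<bar>h k - L\<bar> \<le> \<eta>"
    using LIMSEQ_eventually_close[OF lim eta] by blast
  obtain k where k: "1 \<le> k" "h k < H_min h + \<eta>" using H_min_approx[OF pos eta] by blast
  define K where "K = max K0 k"
  have K: "1 \<le> K" "\<forall>j\<ge>K. h j \<le> L + \<eta>" "\<forall>j\<ge>K. L - \<eta> \<le> h j" "k \<le> K"
    using K0 unfolding K_def by (auto simp: abs_le_iff)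
  define \<beta>0 where "\<beta>0 = max 1 (max (ln (real K * real K + 2) / \<eta>) (real K * ln 2 / \<eta>))"
  show ?thesis using eventually_ge_at_top[of \<beta>0]
  proof (rule eventually_mono, intro allI impI)
    fix \<beta> l a assume \<beta>: "\<beta>0 \<le> \<beta>" and l: "1 < l" "l \<le> 2" and a: "l - 1 = exp (- \<beta> * a)"
    have b: "0 < \<beta>" using \<beta> unfolding \<beta>0_def by linarith
    have bK: "ln (real K * real K + 2) \<le> \<beta> * \<eta>" "real K * ln 2 \<le> \<beta> * \<eta>"
      using \<beta> eta unfolding \<beta>0_def by (auto simp: pos_divide_le_eq)
    note Le = exp_rate_F_beta_le[OF h0 b l a K(1,2) k(1) K(4) less_imp_le[OF k(2)] bK(2)]
    note Ge = exp_rate_F_beta_ge[OF H_min_le[OF pos] H_min_nonneg[OF pos] b l a K(1,3) bK(1)]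
    show "rate_near_min \<eta> (H_min h) L a (exp_rate \<beta> (F_beta h \<beta> l))
      \<and> rate_near_min \<eta> (H_min h) L (2 * a) (exp_rate \<beta> (Ft_beta h \<beta> l))"
      unfolding rate_near_min_def using Le Ge by auto
  qed
qed

text \<open>The min-plus core of the argument: the two rates \<open>A\<^sub>0, A\<^sub>1\<close> of \<open>F\<^sup>0, F\<^sup>1\<close> add up to \<open>0\<close>,
  and each is \<open>min m\<^sub>i (L\<^sub>i - a)\<close> up to \<open>O(\<eta>)\<close>. A case distinction on which terms realise the
  minima leaves \<open>a \<approx> (L\<^sub>0 + L\<^sub>1)/2\<close>, \<open>a \<approx> m\<^sub>0 + L\<^sub>1\<close> or \<open>a \<approx> m\<^sub>1 + L\<^sub>0\<close>, whichever is smallest.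
  The hypothesis on \<open>m\<^sub>0 + m\<^sub>1\<close> rules out both minima being \<open>m\<^sub>i\<close> when \<open>m\<^sub>0 + m\<^sub>1 > 0\<close>.\<close>
lemma puiseux_exponent_estimate:
  fixes a m0 m1 L0 L1 A0 A1 \<eta> :: real
  assumes "0 \<le> a" "0 \<le> m0" "m0 \<le> L0" "0 \<le> m1" "m1 \<le> L1"
    and "m0 = 0 \<longrightarrow> L0 = 0" "m1 = 0 \<longrightarrow> L1 = 0" "0 < \<eta>"
    and "m0 + m1 = 0 \<or> 16 * \<eta> \<le> m0 + m1"
    and "A0 + A1 = 0" "rate_near_min \<eta> m0 L0 a A0" "rate_near_min \<eta> m1 L1 a A1"
  shows "\<bar>a - min (min ((L1 + L0) / 2) (m0 + L1)) (m1 + L0)\<bar> \<le> 4 * \<eta>"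
proof -
  define hL where "hL = (L1 + L0) / 2"
  have "2 * hL = L1 + L0" unfolding hL_def by simp
  thus ?thesis unfolding hL_def[symmetric]
    using assms unfolding rate_near_min_def min_def abs_if by (auto split: if_splits)
qed

lemma rate_near_min_shift:
  fixes A m L d d' \<eta> \<delta> :: real
  assumes "rate_near_min \<eta> m L d A" "\<bar>d - d'\<bar> \<le> \<delta>"
  shows "\<bar>A - min m (L - d')\<bar> \<le> 2 * \<eta> + \<delta>"
proof -
  have "min m (L - d') - \<delta> - 2 * \<eta> \<le> A" "A \<le> min m (L - d') + \<delta> + 2 * \<eta>"
    using assms unfolding rate_near_min_def abs_le_iff min_def by (auto split: if_splits)
  thus ?thesis by linarith
qed

lemma lambda_beta_le_2:
  assumes rdw: "reduced_double_well H h0 h1" and b: "0 < \<beta>"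
  shows "lambda_beta H \<beta> \<le> 2"
proof (rule ccontr)
  note R = reduced_double_wellD[OF rdw]
  define l where "l = lambda_beta H \<beta>"
  have l1: "1 < l" and FF: "F_beta h0 \<beta> l * F_beta h1 \<beta> l = 1"
    using lambda_beta_root[OF rdw b] unfolding l_def by auto
  have h: "\<forall>k\<ge>1. 0 \<le> h0 k" "\<forall>k\<ge>1. 0 \<le> h1 k" using R(3,4) by (auto intro: less_imp_le)
  assume "\<not> lambda_beta H \<beta> \<le> 2"
  hence "1/(l-1) < 1" unfolding l_def by (simp add: divide_less_eq)
  hence "F_beta h0 \<beta> l * F_beta h1 \<beta> l < 1 * 1"
    using F_beta_le[OF h(1) _ l1, of \<beta>] F_beta_le[OF h(2) _ l1, of \<beta>]
      F_beta_pos[OF h(1) _ l1, of \<beta>] F_beta_pos[OF h(2) _ l1, of \<beta>] b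
    by (intro mult_strict_mono) auto
  thus False using FF by simp
qed

lemma exp_rate_F_beta_sum_eq_0:
  assumes rdw: "reduced_double_well H h0 h1" and b: "0 < \<beta>"
  shows "exp_rate \<beta> (F_beta h0 \<beta> (lambda_beta H \<beta>)) + exp_rate \<beta> (F_beta h1 \<beta> (lambda_beta H \<beta>)) = 0"
proof -
  note R = reduced_double_wellD[OF rdw]
  define l where "l = lambda_beta H \<beta>"
  have l1: "1 < l" and FF: "F_beta h0 \<beta> l * F_beta h1 \<beta> l = 1"
    using lambda_beta_root[OF rdw b] unfolding l_def by auto
  have h: "\<forall>k\<ge>1. 0 \<le> h0 k" "\<forall>k\<ge>1. 0 \<le> h1 k" using R(3,4) by (auto intro: less_imp_le)
  have "ln (F_beta h0 \<beta> l) + ln (F_beta h1 \<beta> l) = ln (F_beta h0 \<beta> l * F_beta h1 \<beta> l)"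
    using F_beta_pos[OF h(1) _ l1, of \<beta>] F_beta_pos[OF h(2) _ l1, of \<beta>] b by (simp add: ln_mult)
  hence "ln (F_beta h0 \<beta> l) = - ln (F_beta h1 \<beta> l)" using FF by simp
  thus ?thesis unfolding l_def[symmetric] by simp
qed

lemma exp_rates_eventually_close:
  assumes rdw: "reduced_double_well H h0 h1" and eta: "0 < \<eta>"
    and side: "H_min h0 + H_min h1 = 0 \<or> 16 * \<eta> \<le> H_min h0 + H_min h1"
  defines "\<gamma> \<equiv> puiseux_gamma h0 h1" and "lam \<equiv> lambda_beta H"
  shows "eventually (\<lambda>\<beta>. \<bar>exp_rate \<beta> (lam \<beta> - 1) - \<gamma>\<bar> \<le> 10 * \<eta>
     \<and> \<bar>exp_rate \<beta> (F_beta h0 \<beta> (lam \<beta>)) - min (H_min h0) (H_inf h0 - \<gamma>)\<bar> \<le> 10 * \<eta>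
     \<and> \<bar>exp_rate \<beta> (F_beta h1 \<beta> (lam \<beta>)) - min (H_min h1) (H_inf h1 - \<gamma>)\<bar> \<le> 10 * \<eta>
     \<and> \<bar>exp_rate \<beta> (Ft_beta h0 \<beta> (lam \<beta>)) - min (H_min h0) (H_inf h0 - 2 * \<gamma>)\<bar> \<le> 10 * \<eta>
     \<and> \<bar>exp_rate \<beta> (Ft_beta h1 \<beta> (lam \<beta>)) - min (H_min h1) (H_inf h1 - 2 * \<gamma>)\<bar> \<le> 10 * \<eta>) at_top"
proof -
  note R = reduced_double_wellD[OF rdw]
  show ?thesis
    using eventually_gt_at_top[of 0] exp_rates_F_beta_eventually[OF R(3) R(5) eta]
      exp_rates_F_beta_eventually[OF R(4) R(6) eta]
  proof eventually_elim
    case (elim \<beta>)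
    define a where "a = exp_rate \<beta> (lam \<beta> - 1)"
    have b: "0 < \<beta>" using elim(1) .
    have l: "1 < lam \<beta>" "lam \<beta> \<le> 2" and a_eq: "lam \<beta> - 1 = exp (- \<beta> * a)"
      using lambda_beta_root[OF rdw b] lambda_beta_le_2[OF rdw b] b unfolding a_def lam_def by auto
    have "0 \<le> a" using l b unfolding a_def by (simp add: divide_nonpos_pos)
    moreover obtain S0: "rate_near_min \<eta> (H_min h0) (H_inf h0) a (exp_rate \<beta> (F_beta h0 \<beta> (lam \<beta>)))"
        "rate_near_min \<eta> (H_min h0) (H_inf h0) (2 * a) (exp_rate \<beta> (Ft_beta h0 \<beta> (lam \<beta>)))"
      using elim(2) l a_eq by blast
    moreover obtain S1: "rate_near_min \<eta> (H_min h1) (H_inf h1) a (exp_rate \<beta> (F_beta h1 \<beta> (lam \<beta>)))"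
        "rate_near_min \<eta> (H_min h1) (H_inf h1) (2 * a) (exp_rate \<beta> (Ft_beta h1 \<beta> (lam \<beta>)))"
      using elim(3) l a_eq by blast
    ultimately have G: "\<bar>a - \<gamma>\<bar> \<le> 4 * \<eta>"
      unfolding \<gamma>_def puiseux_gamma_def
      using exp_rate_F_beta_sum_eq_0[OF rdw b, folded lam_def] side eta
        H_min_nonneg[OF R(3)] H_min_nonneg[OF R(4)] H_min_le_limit[OF R(3,5)] H_min_le_limit[OF R(4,6)]
        limit_eq_0_if_H_min_eq_0[OF R(3,5)] limit_eq_0_if_H_min_eq_0[OF R(4,6)]
      by (intro puiseux_exponent_estimate) auto
    have G2: "\<bar>2 * a - 2 * \<gamma>\<bar> \<le> 8 * \<eta>" using G by simp
    show ?case
      using G rate_near_min_shift[OF S0(1) G] rate_near_min_shift[OF S1(1) G]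
        rate_near_min_shift[OF S0(2) G2] rate_near_min_shift[OF S1(2) G2]
      unfolding a_def[symmetric] by (intro conjI; linarith)
  qed
qed

lemma tendsto_if_eventually_close:
  fixes f :: "'a \<Rightarrow> real"
  assumes "0 < \<delta>" and close: "\<And>\<eta>. 0 < \<eta> \<Longrightarrow> \<eta> < \<delta> \<Longrightarrow> eventually (\<lambda>x. \<bar>f x - c\<bar> \<le> C * \<eta>) F"
  shows "(f \<longlongrightarrow> c) F"
  unfolding tendsto_iff dist_real_def
proof (intro allI impI)
  fix e :: real assume e: "0 < e"
  define \<eta> where "\<eta> = min (\<delta> / 2) (e / (2 * (\<bar>C\<bar> + 1)))"
  have \<eta>: "0 < \<eta>" "\<eta> < \<delta>" unfolding \<eta>_def using assms(1) e by auto
  have "C * \<eta> \<le> \<bar>C\<bar> * \<eta>" using \<eta>(1) by (simp add: mult_right_mono)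
  also have "\<dots> \<le> \<bar>C\<bar> * (e / (2 * (\<bar>C\<bar> + 1)))" unfolding \<eta>_def by (intro mult_left_mono) auto
  also have "\<dots> < e" using e by (simp add: field_simps add_nonneg_pos)
  finally show "eventually (\<lambda>x. \<bar>f x - c\<bar> < e) F"
    using close[OF \<eta>] by (auto elim: eventually_mono)
qed

theorem proposition3p7:
  fixes H :: "seq \<Rightarrow> real" and h0 h1 :: "nat \<Rightarrow> real"
  assumes "reduced_double_well H h0 h1"
  defines "\<gamma> \<equiv> puiseux_gamma h0 h1"
  shows "((\<lambda>\<beta>. - (1 / \<beta>) * ln (lambda_beta H \<beta> - 1)) \<longlongrightarrow> \<gamma>) at_top
    \<and> ((\<lambda>\<beta>. - (1 / \<beta>) * ln (F_beta h0 \<beta> (lambda_beta H \<beta>)))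
           \<longlongrightarrow> min (H_min h0) (H_inf h0 - \<gamma>)) at_top
    \<and> ((\<lambda>\<beta>. - (1 / \<beta>) * ln (F_beta h1 \<beta> (lambda_beta H \<beta>)))
           \<longlongrightarrow> min (H_min h1) (H_inf h1 - \<gamma>)) at_top
    \<and> ((\<lambda>\<beta>. - (1 / \<beta>) * ln (Ft_beta h0 \<beta> (lambda_beta H \<beta>)))
           \<longlongrightarrow> min (H_min h0) (H_inf h0 - 2 * \<gamma>)) at_top
    \<and> ((\<lambda>\<beta>. - (1 / \<beta>) * ln (Ft_beta h1 \<beta> (lambda_beta H \<beta>)))
           \<longlongrightarrow> min (H_min h1) (H_inf h1 - 2 * \<gamma>)) at_top"
proof -
  note R = reduced_double_wellD[OF assms(1)]
  define s where "s = H_min h0 + H_min h1"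
  have "0 \<le> s" unfolding s_def using H_min_nonneg[OF R(3)] H_min_nonneg[OF R(4)] by simp
  define \<delta> where "\<delta> = (if s = 0 then 1 else s / 16)"
  have \<delta>: "0 < \<delta>" unfolding \<delta>_def using \<open>0 \<le> s\<close> by auto
  have side: "s = 0 \<or> 16 * \<eta> \<le> s" if "\<eta> < \<delta>" for \<eta>
    using that unfolding \<delta>_def by (cases "s = 0") auto
  note E = exp_rates_eventually_close[OF assms(1) _ side[unfolded s_def], folded \<gamma>_def]
  show ?thesis
    by (intro conjI; rule tendsto_if_eventually_close[OF \<delta>, where C = 10];
        erule (1) E[THEN eventually_mono]) auto
qed

end
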